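(* For each $\lambda\in K^*$, the algebras $T(\lambda^{-2})$ and $\Sigma(\lambda)$ are isomorphic.
   Context: $K$ is an algebraically closed field; paths composed left to right. For a triangulation quiver $(Q,f)$ (finite connected quiver, $\ge2$ vertices, exactly two arrows start and two end at each vertex, $f$ a permutation of arrows with $s(f(\alpha))=t(\alpha)$, $f^3=\mathrm{id}$), $\bar\alpha$ is the other arrow with source $s(\alpha)$, $g(\alpha)=\overline{f(\alpha)}$, $n_\alpha$ the $g$-orbit length; with weights $m_\alpha$ and parameters $c_\alpha\in K^*$ constant on $g$-orbits, $A_\alpha=\alpha g(\alpha)\cdots g^{m_\alpha n_\alpha-2}(\alpha)$; $\alpha$ virtual if $m_\alpha n_\alpha=2$. The weighted surface algebra is $KQ/I$, $I$ generated by $\alpha f(\alpha)-c_{\bar\alpha}A_{\bar\alpha}$ (all $\alpha$), $\alpha f(\alpha)g(f(\alpha))$ ($f^2(\alpha)$ not virtual), $\alpha g(\alpha)f(g(\alpha))$ ($f(\alpha)$ not virtual). $T(\mu)$ ($\mu\in K^*$): vertices $1,2,3$; arrows $\alpha_1:1\to2,\alpha_2:2\to3,\alpha_3:3\to1,\beta_1:2\to1,\beta_2:3\to2,\beta_3:1\to3$; $f=(\alpha_1\,\alpha_2\,\alpha_3)(\beta_1\,\beta_3\,\beta_2)$; weights $2,2,1$ and parameters $\mu,1,1$ on the $g$-orbits $(\alpha_1\,\beta_1),(\alpha_2\,\beta_2),(\alpha_3\,\beta_3)$. $\Sigma(\lambda)$: vertices $1,2,3$; arrows $\alpha:1\to1$,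 $\beta:1\to2$, $\gamma:2\to1$, $\sigma:2\to3$, $\delta:3\to2$, $\eta:3\to3$; $f=(\alpha\,\beta\,\gamma)(\eta\,\delta\,\sigma)$ (so $g$-orbits $(\alpha),(\beta\,\sigma\,\delta\,\gamma),(\eta)$); weights $2,1,2$ and parameters $1,\lambda,1$ on these orbits respectively. *)

theory Defs
  imports "HOL-Algebra.QuotRing" "HOL-Computational_Algebra.Polynomial"
begin

definition alg_closed :: "'k::field itself \<Rightarrow> bool" where
  "alg_closed _ \<longleftrightarrow> (\<forall>p::'k poly. 0 < degree p \<longrightarrow> (\<exists>x. poly p x = 0))"

section \<open>Path algebras (paths composed left to right)\<close>

text \<open>A quiver is given by a set of arrows Ar with source and target maps s, t;
  its vertices are those that occur as sources (every vertex of a triangulation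
  quiver is the source of two arrows).  A path is a pair (v, as): a start vertex v
  and a composable list of arrows starting at v; (v, []) is the trivial path e_v.
  The path algebra KQ is the algebra of finitely supported K-valued functions on
  paths, with multiplication given by concatenation (the product is zero when the
  end of the first path is not the start of the second).\<close>

definition qverts :: "'a set \<Rightarrow> ('a \<Rightarrow> 'v) \<Rightarrow> 'v set" where
  "qverts Ar s = s ` Ar"

definition valid_path :: "'a set \<Rightarrow> ('a \<Rightarrow> 'v) \<Rightarrow> ('a \<Rightarrow> 'v) \<Rightarrow> 'v \<times> 'a list \<Rightarrow> bool" where
  "valid_path Ar s t p \<longleftrightarrow> fst p \<in> qverts Ar s \<and> set (snd p) \<subseteq> Ar \<and>
     (snd p \<noteq> [] \<longrightarrow> s (hd (snd p)) = fst p) \<and>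
     successively (\<lambda>a b. t a = s b) (snd p)"

definition pend :: "('a \<Rightarrow> 'v) \<Rightarrow> 'v \<times> 'a list \<Rightarrow> 'v" where
  "pend t p = (if snd p = [] then fst p else t (last (snd p)))"

definition path_ring ::
  "'a set \<Rightarrow> ('a \<Rightarrow> 'v) \<Rightarrow> ('a \<Rightarrow> 'v) \<Rightarrow> (('v \<times> 'a list) \<Rightarrow> 'k::field) ring" where
  "path_ring Ar s t =
    \<lparr> carrier = {x. finite {p. x p \<noteq> 0} \<and> (\<forall>p. x p \<noteq> 0 \<longrightarrow> valid_path Ar s t p)},
      Group.monoid.mult = (\<lambda>x y p. \<Sum>i = 0..length (snd p).
                 x (fst p, take i (snd p)) * y (pend t (fst p, take i (snd p)), drop i (snd p))),
      one = (\<lambda>p. if snd p = [] \<and> fst p \<in> qverts Ar s then 1 else 0),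
      zero = (\<lambda>p. 0),
      add = (\<lambda>x y p. x p + y p) \<rparr>"

definition pe :: "'v \<times> 'a list \<Rightarrow> ('v \<times> 'a list) \<Rightarrow> 'k::field" where
  "pe p = (\<lambda>q. if q = p then 1 else 0)"

definition apath :: "('a \<Rightarrow> 'v) \<Rightarrow> 'a list \<Rightarrow> 'v \<times> 'a list" where
  "apath s as = (s (hd as), as)"

definition qbar :: "'a set \<Rightarrow> ('a \<Rightarrow> 'v) \<Rightarrow> 'a \<Rightarrow> 'a" where
  "qbar Ar s a = (THE b. b \<in> Ar \<and> s b = s a \<and> b \<noteq> a)"

definition gperm :: "'a set \<Rightarrow> ('a \<Rightarrow> 'v) \<Rightarrow> ('a \<Rightarrow> 'a) \<Rightarrow> 'a \<Rightarrow> 'a" where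
  "gperm Ar s f a = qbar Ar s (f a)"

definition gorb_len :: "'a set \<Rightarrow> ('a \<Rightarrow> 'v) \<Rightarrow> ('a \<Rightarrow> 'a) \<Rightarrow> 'a \<Rightarrow> nat" where
  "gorb_len Ar s f a = (LEAST k. 0 < k \<and> (gperm Ar s f ^^ k) a = a)"

definition Apath_list :: "'a set \<Rightarrow> ('a \<Rightarrow> 'v) \<Rightarrow> ('a \<Rightarrow> 'a) \<Rightarrow> ('a \<Rightarrow> nat) \<Rightarrow> 'a \<Rightarrow> 'a list" where
  "Apath_list Ar s f m a =
     map (\<lambda>i. (gperm Ar s f ^^ i) a) [0..<m a * gorb_len Ar s f a - 1]"

definition virtual_arrow :: "'a set \<Rightarrow> ('a \<Rightarrow> 'v) \<Rightarrow> ('a \<Rightarrow> 'a) \<Rightarrow> ('a \<Rightarrow> nat) \<Rightarrow> 'a \<Rightarrow> bool" where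
  "virtual_arrow Ar s f m a \<longleftrightarrow> m a * gorb_len Ar s f a = 2"

text \<open>Generators of the ideal I of the weighted surface algebra; weights m and
  parameters c are given as functions on arrows (constant on g-orbits).\<close>
definition WSA_rels ::
  "'a set \<Rightarrow> ('a \<Rightarrow> 'v) \<Rightarrow> ('a \<Rightarrow> 'a) \<Rightarrow> ('a \<Rightarrow> nat) \<Rightarrow> ('a \<Rightarrow> 'k::field)
     \<Rightarrow> (('v \<times> 'a list) \<Rightarrow> 'k) set" where
  "WSA_rels Ar s f m c =
     {(\<lambda>q. pe (apath s [a, f a]) q
            - c (qbar Ar s a) * pe (apath s (Apath_list Ar s f m (qbar Ar s a))) q) | a. a \<in> Ar}
   \<union> {pe (apath s [a, f a, gperm Ar s f (f a)]) | a. a \<in> Ar \<and> \<not> virtual_arrow Ar s f m (f (f a))}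
   \<union> {pe (apath s [a, gperm Ar s f a, f (gperm Ar s f a)]) | a. a \<in> Ar \<and> \<not> virtual_arrow Ar s f m (f a)}"

definition WSA_ideal ::
  "'a set \<Rightarrow> ('a \<Rightarrow> 'v) \<Rightarrow> ('a \<Rightarrow> 'v) \<Rightarrow> ('a \<Rightarrow> 'a) \<Rightarrow> ('a \<Rightarrow> nat) \<Rightarrow> ('a \<Rightarrow> 'k::field)
     \<Rightarrow> (('v \<times> 'a list) \<Rightarrow> 'k) set" where
  "WSA_ideal Ar s t f m c = genideal (path_ring Ar s t) (WSA_rels Ar s f m c)"

definition kalg_quot_iso ::
  "('p \<Rightarrow> 'k::field) ring \<Rightarrow> ('p \<Rightarrow> 'k) set \<Rightarrow> ('q \<Rightarrow> 'k) ring \<Rightarrow> ('q \<Rightarrow> 'k) set \<Rightarrow> bool" where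
  "kalg_quot_iso R I S J \<longleftrightarrow>
     (\<exists>h \<in> ring_iso (R Quot I) (S Quot J).
        \<forall>c::'k. h (I +>\<^bsub>R\<^esub> (\<lambda>p. c * one R p)) = J +>\<^bsub>S\<^esub> (\<lambda>q. c * one S q))"

datatype arrT = al1 | al2 | al3 | be1 | be2 | be3

fun sT :: "arrT \<Rightarrow> nat" where
  "sT al1 = 1" | "sT al2 = 2" | "sT al3 = 3" | "sT be1 = 2" | "sT be2 = 3" | "sT be3 = 1"
fun tT :: "arrT \<Rightarrow> nat" where
  "tT al1 = 2" | "tT al2 = 3" | "tT al3 = 1" | "tT be1 = 1" | "tT be2 = 2" | "tT be3 = 3"
fun fT :: "arrT \<Rightarrow> arrT" where
  "fT al1 = al2" | "fT al2 = al3" | "fT al3 = al1" | "fT be1 = be3" | "fT be3 = be2" | "fT be2 = be1"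
text \<open>g-orbits (al1 be1), (al2 be2), (al3 be3): weights 2,2,1, parameters mu,1,1\<close>
fun mT :: "arrT \<Rightarrow> nat" where
  "mT al1 = 2" | "mT be1 = 2" | "mT al2 = 2" | "mT be2 = 2" | "mT al3 = 1" | "mT be3 = 1"
fun cT :: "'k::field \<Rightarrow> arrT \<Rightarrow> 'k" where
  "cT mu al1 = mu" | "cT mu be1 = mu" | "cT mu al2 = 1" | "cT mu be2 = 1" | "cT mu al3 = 1" | "cT mu be3 = 1"

datatype arrS = alS | beS | gaS | siS | deS | etS

fun sS :: "arrS \<Rightarrow> nat" where
  "sS alS = 1" | "sS beS = 1" | "sS gaS = 2" | "sS siS = 2" | "sS deS = 3" | "sS etS = 3"
fun tS :: "arrS \<Rightarrow> nat" where
  "tS alS = 1" | "tS beS = 2" | "tS gaS = 1" | "tS siS = 3" | "tS deS = 2" | "tS etS = 3"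
fun fS :: "arrS \<Rightarrow> arrS" where
  "fS alS = beS" | "fS beS = gaS" | "fS gaS = alS" | "fS etS = deS" | "fS deS = siS" | "fS siS = etS"
text \<open>g-orbits (al), (be si de ga), (et): weights 2,1,2, parameters 1,lambda,1\<close>
fun mS :: "arrS \<Rightarrow> nat" where
  "mS alS = 2" | "mS beS = 1" | "mS siS = 1" | "mS deS = 1" | "mS gaS = 1" | "mS etS = 2"
fun cS :: "'k::field \<Rightarrow> arrS \<Rightarrow> 'k" where
  "cS lam alS = 1" | "cS lam beS = lam" | "cS lam siS = lam" | "cS lam deS = lam"
| "cS lam gaS = lam" | "cS lam etS = 1"

end

theory Submission
  imports Defs
begin

(*
  Both algebras are quotients of path algebras, and the isomorphism is written down on arrows
  in both directions:
    Phi: al1 |-> beS, be1 |-> gaS, al2 |-> siS, be2 |-> lam^-1 deS, al3 |-> lam^-1 deS gaS,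
         be3 |-> beS siS;
    Psi: alS |-> al1 be1, beS |-> al1, gaS |-> be1, siS |-> al2, deS |-> lam be2,
         etS |-> lam be2 al2.
  A path algebra is free on its arrows, so these assignments extend to algebra homomorphisms.
  Each defining relation of one algebra is sent to an explicit combination of terms u r w, with
  u, w paths and r a relation of the other algebra, so both maps descend to the quotients.  On
  arrows Psi o Phi and Phi o Psi are the identity up to the relations be2 be1 = al3,
  al1 al2 = be3, beS gaS = alS and deS siS = etS, hence the induced maps are mutually inverse.
*)

section \<open>Path algebras\<close>

definition path_mult ::
  "('a \<Rightarrow> 'v) \<Rightarrow> ('v \<times> 'a list \<Rightarrow> 'k::field) \<Rightarrow> ('v \<times> 'a list \<Rightarrow> 'k) \<Rightarrow> 'v \<times> 'a list \<Rightarrow> 'k" where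
  "path_mult t x y = (\<lambda>p. \<Sum>i = 0..length (snd p).
     x (fst p, take i (snd p)) * y (pend t (fst p, take i (snd p)), drop i (snd p)))"

lemma path_ring_carrier:
  "carrier (path_ring Ar s t) =
     {x. finite {p. x p \<noteq> 0} \<and> (\<forall>p. x p \<noteq> 0 \<longrightarrow> valid_path Ar s t p)}"
  by (simp add: path_ring_def)

lemma path_ring_mult: "Group.monoid.mult (path_ring Ar s t) = path_mult t"
  by (intro ext) (simp add: path_ring_def path_mult_def)

lemma path_ring_one:
  "Group.monoid.one (path_ring Ar s t) = (\<lambda>p. if snd p = [] \<and> fst p \<in> qverts Ar s then 1 else 0)"
  by (simp add: path_ring_def)

lemma path_ring_zero: "ring.zero (path_ring Ar s t) = (\<lambda>p. 0)"
  by (simp add: path_ring_def)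

lemma path_ring_add: "ring.add (path_ring Ar s t) = (\<lambda>x y p. x p + y p)"
  by (simp add: path_ring_def)

lemmas path_ring_simps = path_ring_carrier path_ring_mult path_ring_one path_ring_zero path_ring_add

lemma path_ring_carrierI:
  assumes "finite S" "\<And>p. x p \<noteq> 0 \<Longrightarrow> p \<in> S \<and> valid_path Ar s t p"
  shows "x \<in> carrier (path_ring Ar s t)"
proof -
  have "{p. x p \<noteq> 0} \<subseteq> S" using assms(2) by blast
  then show ?thesis using assms finite_subset unfolding path_ring_carrier by blast
qed

lemma path_ring_carrierD:
  assumes "x \<in> carrier (path_ring Ar s t)"
  shows "finite {p. x p \<noteq> 0}" "x p \<noteq> 0 \<Longrightarrow> valid_path Ar s t p"
  using assms unfolding path_ring_carrier by blast+

lemma pend_Nil [simp]: "pend t (v, []) = v"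
  by (simp add: pend_def)

lemma pend_Cons: "pend t (v, a # as) = pend t (t a, as)"
  by (simp add: pend_def)

lemma pend_take_drop:
  assumes "i + k \<le> length as"
  shows "pend t (pend t (v, take i as), take k (drop i as)) = pend t (v, take (i + k) as)"
proof (cases "k = 0")
  case False
  with assms have "take k (drop i as) \<noteq> []" "take (i + k) as \<noteq> []" by auto
  then show ?thesis by (simp add: pend_def take_add)
qed (simp add: pend_def)

lemma pend_drop:
  "i \<le> length as \<Longrightarrow> pend t (pend t (v, take i as), drop i as) = pend t (v, as)"
  using pend_take_drop[of i "length as - i" as t v] by simp

lemma valid_path_Nil: "v \<in> qverts Ar s \<Longrightarrow> valid_path Ar s t (v, [])"
  by (simp add: valid_path_def)

lemma valid_path_Cons_iff:
  assumes "t ` Ar \<subseteq> s ` Ar"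
  shows "valid_path Ar s t (v, a # as) \<longleftrightarrow> a \<in> Ar \<and> s a = v \<and> valid_path Ar s t (t a, as)"
  using assms unfolding valid_path_def qverts_def by (cases as) auto

lemma valid_path_append:
  assumes "valid_path Ar s t (v, take i as)" "valid_path Ar s t (pend t (v, take i as), drop i as)"
  shows "valid_path Ar s t (v, as)"
proof -
  have as: "as = take i as @ drop i as" by simp
  have "set as \<subseteq> Ar" using assms as unfolding valid_path_def
    by (metis Un_subset_iff fst_conv set_append snd_conv)
  moreover have "as \<noteq> [] \<longrightarrow> s (hd as) = v"
    using assms unfolding valid_path_def pend_def
    by (cases "take i as = []") (auto simp: hd_take)
  moreover have "successively (\<lambda>a b. t a = s b) (take i as @ drop i as)"
    unfolding successively_append_iff using assms unfolding valid_path_def pend_def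
    by (auto split: if_splits)
  ultimately show ?thesis using assms(1) by (simp add: valid_path_def)
qed

lemma valid_path_pend:
  assumes "valid_path Ar s t p" "t ` Ar \<subseteq> s ` Ar"
  shows "pend t p \<in> qverts Ar s"
  using assms unfolding valid_path_def pend_def qverts_def
  by (auto split: if_splits) (meson image_subset_iff in_mono last_in_set)

lemma path_mult_nonzero:
  assumes "path_mult t x y (v, as) \<noteq> 0"
  obtains i where "i \<le> length as" "x (v, take i as) \<noteq> 0" "y (pend t (v, take i as), drop i as) \<noteq> 0"
proof -
  from assms obtain i where "i \<in> {0..length as}"
    "x (v, take i as) * y (pend t (v, take i as), drop i as) \<noteq> 0"
    unfolding path_mult_def by (auto elim: sum.not_neutral_contains_not_neutral)
  then show thesis using that by auto
qed

lemma path_mult_assoc: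
  fixes x y z :: "'v \<times> 'a list \<Rightarrow> 'k::field"
  shows "path_mult t (path_mult t x y) z = path_mult t x (path_mult t y z)"
  \<comment> \<open>both sides sum over the ways of cutting a path into three consecutive pieces\<close>
proof (rule ext)
  fix p :: "'v \<times> 'a list"
  obtain v as where p: "p = (v, as)" by (cases p)
  define n where "n = length as"
  define g where "g i k = x (v, take i as) * y (pend t (v, take i as), take k (drop i as))
      * z (pend t (v, take (i + k) as), drop (i + k) as)" for i k
  have "path_mult t (path_mult t x y) z p = (\<Sum>j\<le>n. \<Sum>i\<le>j. g i (j - i))"
    unfolding p path_mult_def g_def n_def atLeast0AtMost
    by (auto simp: sum_distrib_right min_def take_take drop_take intro!: sum.cong)
  also have "\<dots> = (\<Sum>(i, k)\<in>{(i, k). i + k \<le> n}. g i k)"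
    by (rule sum.triangle_reindex_eq[symmetric])
  also have "{(i, k). i + k \<le> n} = (SIGMA i:{..n}. {..n - i})"
    by auto
  also have "(\<Sum>(i, k)\<in>(SIGMA i:{..n}. {..n - i}). g i k) = (\<Sum>i\<le>n. \<Sum>k\<le>n - i. g i k)"
    by (rule sum.Sigma[symmetric]) auto
  also have "\<dots> = path_mult t x (path_mult t y z) p"
    unfolding p path_mult_def g_def n_def atLeast0AtMost
    by (auto simp: sum_distrib_left pend_take_drop mult.assoc add.commute intro!: sum.cong)
  finally show "path_mult t (path_mult t x y) z p = path_mult t x (path_mult t y z) p" .
qed

lemma path_mult_scale_left: "path_mult t (\<lambda>q. c * x q) y = (\<lambda>q. c * path_mult t x y q)"
  unfolding path_mult_def by (simp add: sum_distrib_left mult.assoc)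

lemma path_mult_scale_right: "path_mult t x (\<lambda>q. c * y q) = (\<lambda>q. c * path_mult t x y q)"
  unfolding path_mult_def by (simp add: sum_distrib_left ac_simps)

lemma path_mult_add_left: "path_mult t (\<lambda>q. x q + z q) y = (\<lambda>q. path_mult t x y q + path_mult t z y q)"
  unfolding path_mult_def by (simp add: sum.distrib distrib_right)

lemma path_mult_add_right: "path_mult t x (\<lambda>q. y q + z q) = (\<lambda>q. path_mult t x y q + path_mult t x z q)"
  unfolding path_mult_def by (simp add: sum.distrib distrib_left)

lemma path_mult_diff_left: "path_mult t (\<lambda>q. x q - z q) y = (\<lambda>q. path_mult t x y q - path_mult t z y q)"
  unfolding path_mult_def by (simp add: sum_subtractf left_diff_distrib)

lemma path_mult_diff_right: "path_mult t x (\<lambda>q. y q - z q) = (\<lambda>q. path_mult t x y q - path_mult t x z q)"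
  unfolding path_mult_def by (simp add: sum_subtractf right_diff_distrib)

lemmas path_mult_linear = path_mult_scale_left path_mult_scale_right path_mult_add_left
  path_mult_add_right path_mult_diff_left path_mult_diff_right

lemma path_mult_closed:
  assumes x: "x \<in> carrier (path_ring Ar s t)" and y: "y \<in> carrier (path_ring Ar s t)"
  shows "path_mult t x y \<in> carrier (path_ring Ar s t)"
proof (rule path_ring_carrierI)
  let ?S = "(\<lambda>(p, q). (fst p, snd p @ snd q)) ` ({p. x p \<noteq> 0} \<times> {p. y p \<noteq> 0})"
  show "finite ?S" using x y by (simp add: path_ring_carrier)
  fix r assume r: "path_mult t x y r \<noteq> 0"
  obtain v as where [simp]: "r = (v, as)" by (cases r)
  from r obtain i where "x (v, take i as) \<noteq> 0" "y (pend t (v, take i as), drop i as) \<noteq> 0"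
    by (auto elim: path_mult_nonzero)
  then have "r \<in> ?S"
    by (intro image_eqI[where x = "((v, take i as), (pend t (v, take i as), drop i as))"]) simp_all
  moreover have "valid_path Ar s t (v, as)"
    by (rule valid_path_append[of _ _ _ v i])
      (use path_ring_carrierD(2)[OF x] path_ring_carrierD(2)[OF y] \<open>x _ \<noteq> 0\<close> \<open>y _ \<noteq> 0\<close> in blast)+
  ultimately show "r \<in> ?S \<and> valid_path Ar s t r" by simp
qed

lemma path_mult_one_left:
  "path_mult t (\<lambda>p. if snd p = [] \<and> fst p \<in> V then 1 else 0) x (v, as) = (if v \<in> V then x (v, as) else 0)"
proof -
  have "path_mult t (\<lambda>p. if snd p = [] \<and> fst p \<in> V then 1 else 0) x (v, as)
      = (\<Sum>i\<in>{0..length as}. if i = 0 then (if v \<in> V then x (v, as) else 0) else 0)"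
    unfolding path_mult_def by (intro sum.cong) auto
  then show ?thesis by simp
qed

lemma path_mult_one_right:
  "path_mult t x (\<lambda>p. if snd p = [] \<and> fst p \<in> V then 1 else 0) (v, as) =
     (if pend t (v, as) \<in> V then x (v, as) else 0)"
proof -
  have "path_mult t x (\<lambda>p. if snd p = [] \<and> fst p \<in> V then 1 else 0) (v, as)
      = (\<Sum>i\<in>{0..length as}. if i = length as then (if pend t (v, as) \<in> V then x (v, as) else 0) else 0)"
    unfolding path_mult_def by (intro sum.cong) auto
  then show ?thesis by simp
qed

lemma path_ring_lincomb_closed:
  fixes x y :: "'v \<times> 'a list \<Rightarrow> 'k::field"
  assumes x: "x \<in> carrier (path_ring Ar s t)" and y: "y \<in> carrier (path_ring Ar s t)"
  shows "(\<lambda>p. a * x p + b * y p) \<in> carrier (path_ring Ar s t)"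
proof (rule path_ring_carrierI[where S = "{p. x p \<noteq> 0} \<union> {p. y p \<noteq> 0}"])
  fix p assume "a * x p + b * y p \<noteq> 0"
  then have "x p \<noteq> 0 \<or> y p \<noteq> 0" by auto
  then show "p \<in> {p. x p \<noteq> 0} \<union> {p. y p \<noteq> 0} \<and> valid_path Ar s t p"
    using path_ring_carrierD(2)[OF x] path_ring_carrierD(2)[OF y] by blast
qed (use path_ring_carrierD(1)[OF x] path_ring_carrierD(1)[OF y] in simp)

lemma path_ring_scale_closed:
  fixes x :: "'v \<times> 'a list \<Rightarrow> 'k::field"
  shows "x \<in> carrier (path_ring Ar s t) \<Longrightarrow> (\<lambda>p. a * x p) \<in> carrier (path_ring Ar s t)"
  using path_ring_lincomb_closed[of x Ar s t x a 0] by simp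

lemma path_ring_is_ring:
  assumes quiver: "t ` Ar \<subseteq> s ` Ar" "finite Ar"
  shows "ring (path_ring Ar s t :: ('v \<times> 'a list \<Rightarrow> 'k::field) ring)"
proof -
  let ?R = "path_ring Ar s t :: ('v \<times> 'a list \<Rightarrow> 'k) ring"
  have fin_verts: "finite (qverts Ar s)"
    using quiver(2) by (simp add: qverts_def)
  show ?thesis
  proof (rule ringI)
    show "abelian_group ?R"
    proof (rule abelian_groupI)
      fix x y assume "x \<in> carrier ?R" "y \<in> carrier ?R"
      then show "x \<oplus>\<^bsub>?R\<^esub> y \<in> carrier ?R"
        using path_ring_lincomb_closed[of x Ar s t y 1 1] by (simp add: path_ring_add)
    next
      fix x assume "x \<in> carrier ?R"
      then show "\<exists>y\<in>carrier ?R. y \<oplus>\<^bsub>?R\<^esub> x = \<zero>\<^bsub>?R\<^esub>"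
        by (intro bexI[of _ "\<lambda>p. - x p"]) (auto simp: path_ring_simps)
    qed (auto simp: path_ring_simps add.assoc add.commute)
  next
    show "monoid ?R"
    proof (rule monoidI)
      show "\<one>\<^bsub>?R\<^esub> \<in> carrier ?R"
        unfolding path_ring_one
        by (rule path_ring_carrierI[where S = "(\<lambda>v. (v, [])) ` qverts Ar s"])
          (auto simp: fin_verts valid_path_Nil split: if_splits)
    next
      fix x assume "x \<in> carrier ?R"
      then show "\<one>\<^bsub>?R\<^esub> \<otimes>\<^bsub>?R\<^esub> x = x"
        by (auto simp: fun_eq_iff path_ring_simps path_mult_one_left valid_path_def)
    next
      fix x assume "x \<in> carrier ?R"
      then show "x \<otimes>\<^bsub>?R\<^esub> \<one>\<^bsub>?R\<^esub> = x"
        using valid_path_pend[OF _ quiver(1)]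
        by (auto simp: fun_eq_iff path_ring_simps path_mult_one_right)
    qed (simp_all add: path_ring_mult path_mult_closed path_mult_assoc)
  qed (simp_all add: path_ring_simps path_mult_add_left path_mult_add_right)
qed

lemma pe_carrier: "valid_path Ar s t p \<Longrightarrow> pe p \<in> carrier (path_ring Ar s t)"
  by (rule path_ring_carrierI[where S = "{p}"]) (auto simp: pe_def split: if_splits)

lemma pe_apply: "pe p q = (if q = p then 1 else 0)"
  by (simp add: pe_def)

lemma pe_mult:
  fixes t :: "'a \<Rightarrow> 'v"
  shows "path_mult t (pe (v, as) :: 'v \<times> 'a list \<Rightarrow> 'k::field) (pe (w, bs)) =
    (if pend t (v, as) = w then pe (v, as @ bs) else (\<lambda>_. 0))"
proof (rule ext)
  fix r :: "'v \<times> 'a list"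
  obtain u cs where r: "r = (u, cs)" by (cases r)
  have "path_mult t (pe (v, as)) (pe (w, bs)) (u, cs)
     = (\<Sum>i\<in>{0..length cs}. if i = length as then
          (if u = v \<and> take i cs = as \<and> pend t (v, as) = w \<and> drop i cs = bs then 1 else 0) else (0::'k))"
    unfolding path_mult_def pe_def by (intro sum.cong) auto
  also have "\<dots> = (if length as \<le> length cs \<and> u = v \<and> take (length as) cs = as \<and>
      pend t (v, as) = w \<and> drop (length as) cs = bs then 1 else 0)"
    by (simp add: sum.delta)
  also have "\<dots> = (if pend t (v, as) = w then pe (v, as @ bs) else (\<lambda>_. 0)) (u, cs)"
    unfolding pe_def by (auto simp: append_eq_conv_conj) (metis append_take_drop_id)
  finally show "path_mult t (pe (v, as) :: 'v \<times> 'a list \<Rightarrow> 'k) (pe (w, bs)) r =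
      (if pend t (v, as) = w then pe (v, as @ bs) else (\<lambda>_. 0)) r"
    unfolding r .
qed

lemma path_expansion:
  fixes x :: "'v \<times> 'a list \<Rightarrow> 'k::field"
  assumes "finite {p. x p \<noteq> 0}"
  shows "x = (\<lambda>r. \<Sum>p | x p \<noteq> 0. x p * pe p r)"
proof (rule ext)
  fix r
  have "(\<Sum>p | x p \<noteq> 0. x p * pe p r) = (\<Sum>p | x p \<noteq> 0. if p = r then x p else 0)"
    by (intro sum.cong) (auto simp: pe_def)
  also have "\<dots> = x r" using assms by (simp add: sum.delta')
  finally show "x r = (\<Sum>p | x p \<noteq> 0. x p * pe p r)" by simp
qed

lemma path_mult_sum:
  fixes f :: "'i \<Rightarrow> 'v \<times> 'a list \<Rightarrow> 'k::field" and g :: "'j \<Rightarrow> 'v \<times> 'a list \<Rightarrow> 'k"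
  shows "path_mult t (\<lambda>r. \<Sum>i\<in>A. c i * f i r) (\<lambda>r. \<Sum>j\<in>B. d j * g j r)
     = (\<lambda>q. \<Sum>i\<in>A. \<Sum>j\<in>B. c i * d j * path_mult t (f i) (g j) q)"
proof (rule ext)
  fix q :: "'v \<times> 'a list"
  let ?m = "\<lambda>i j k. f i (fst q, take k (snd q)) * g j (pend t (fst q, take k (snd q)), drop k (snd q))"
  have "path_mult t (\<lambda>r. \<Sum>i\<in>A. c i * f i r) (\<lambda>r. \<Sum>j\<in>B. d j * g j r) q
      = (\<Sum>k = 0..length (snd q). \<Sum>i\<in>A. \<Sum>j\<in>B. c i * d j * ?m i j k)"
    unfolding path_mult_def sum_product by (intro sum.cong refl) (simp add: ac_simps)
  also have "\<dots> = (\<Sum>i\<in>A. \<Sum>j\<in>B. \<Sum>k = 0..length (snd q). c i * d j * ?m i j k)"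
    by (subst sum.swap) (intro sum.cong refl sum.swap)
  also have "\<dots> = (\<Sum>i\<in>A. \<Sum>j\<in>B. c i * d j * path_mult t (f i) (g j) q)"
    unfolding path_mult_def by (simp add: sum_distrib_left)
  finally show "path_mult t (\<lambda>r. \<Sum>i\<in>A. c i * f i r) (\<lambda>r. \<Sum>j\<in>B. d j * g j r) q =
      (\<Sum>i\<in>A. \<Sum>j\<in>B. c i * d j * path_mult t (f i) (g j) q)" .
qed

definition starts_at :: "'v \<Rightarrow> ('v \<times> 'a list \<Rightarrow> 'k::zero) \<Rightarrow> bool" where
  "starts_at v x \<longleftrightarrow> (\<forall>q. x q \<noteq> 0 \<longrightarrow> fst q = v)"

definition ends_at :: "('a \<Rightarrow> 'v) \<Rightarrow> 'v \<Rightarrow> ('v \<times> 'a list \<Rightarrow> 'k::zero) \<Rightarrow> bool" where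
  "ends_at t w x \<longleftrightarrow> (\<forall>q. x q \<noteq> 0 \<longrightarrow> pend t q = w)"

lemma starts_at_pe: "starts_at v (pe (v, as))"
  by (simp add: starts_at_def pe_def)

lemma ends_at_pe: "pend t p = w \<Longrightarrow> ends_at t w (pe p)"
  by (simp add: ends_at_def pe_def)

lemma starts_at_scale: "starts_at v x \<Longrightarrow> starts_at v (\<lambda>q. c * x q :: 'k::field)"
  by (simp add: starts_at_def)

lemma ends_at_scale: "ends_at t w x \<Longrightarrow> ends_at t w (\<lambda>q. c * x q :: 'k::field)"
  by (simp add: ends_at_def)

lemma starts_at_path_mult:
  assumes "starts_at v x"
  shows "starts_at v (path_mult t x y)"
  unfolding starts_at_def
proof (intro allI impI)
  fix q assume "path_mult t x y q \<noteq> 0"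
  then obtain i where "x (fst q, take i (snd q)) \<noteq> 0"
    by (metis path_mult_nonzero prod.collapse)
  then show "fst q = v" using assms unfolding starts_at_def by fastforce
qed

lemma ends_at_path_mult:
  assumes "ends_at t w y"
  shows "ends_at t w (path_mult t x y)"
  unfolding ends_at_def
proof (intro allI impI)
  fix q assume "path_mult t x y q \<noteq> 0"
  then obtain i where "i \<le> length (snd q)" "y (pend t (fst q, take i (snd q)), drop i (snd q)) \<noteq> 0"
    by (metis path_mult_nonzero prod.collapse)
  then show "pend t q = w"
    using assms pend_drop[of i "snd q" t "fst q"] unfolding ends_at_def by auto
qed

lemma path_mult_vertex_left:
  fixes z :: "'v \<times> 'a list \<Rightarrow> 'k::field"
  assumes "starts_at v z"
  shows "path_mult t (pe (v, [])) z = z"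
proof (rule ext)
  fix r :: "'v \<times> 'a list"
  obtain u cs where r: "r = (u, cs)" by (cases r)
  have "path_mult t (pe (v, [])) z (u, cs) =
      (\<Sum>i\<in>{0..length cs}. if i = 0 then (if u = v then z (u, cs) else 0) else 0)"
    unfolding path_mult_def pe_def by (intro sum.cong) auto
  then show "path_mult t (pe (v, [])) z r = z r"
    using assms unfolding r starts_at_def by auto
qed

lemma path_mult_disjoint:
  fixes x y :: "'v \<times> 'a list \<Rightarrow> 'k::field"
  assumes "ends_at t w x" "starts_at w' y" "w \<noteq> w'"
  shows "path_mult t x y = (\<lambda>_. 0)"
proof (rule ext)
  fix r :: "'v \<times> 'a list"
  obtain u cs where r: "r = (u, cs)" by (cases r)
  show "path_mult t x y r = 0"
  proof (rule ccontr)
    assume "path_mult t x y r \<noteq> 0"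
    then obtain i where "x (u, take i cs) \<noteq> 0" "y (pend t (u, take i cs), drop i cs) \<noteq> 0"
      unfolding r by (rule path_mult_nonzero)
    then show False using assms unfolding ends_at_def starts_at_def by fastforce
  qed
qed

text \<open>Relations of weighted surface algebras are either paths or of the form p - c q.\<close>

definition comm_rel :: "'v \<times> 'a list \<Rightarrow> 'k \<Rightarrow> 'v \<times> 'a list \<Rightarrow> ('v \<times> 'a list \<Rightarrow> 'k::field)" where
  "comm_rel p c q = (\<lambda>x. pe p x - c * pe q x)"

lemma path_mult_comm_rel_left:
  "path_mult t (comm_rel p c q) y = (\<lambda>x. path_mult t (pe p) y x - c * path_mult t (pe q) y x)"
  unfolding comm_rel_def by (simp add: path_mult_linear)

lemma path_mult_comm_rel_right:
  "path_mult t x (comm_rel p c q) = (\<lambda>y. path_mult t x (pe p) y - c * path_mult t x (pe q) y)"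
  unfolding comm_rel_def by (simp add: path_mult_linear)

lemma comm_rel_carrier:
  "valid_path Ar s t p \<Longrightarrow> valid_path Ar s t q \<Longrightarrow> comm_rel p c q \<in> carrier (path_ring Ar s t)"
  using path_ring_lincomb_closed[OF pe_carrier pe_carrier, of Ar s t p q 1 "-c"]
  by (simp add: comm_rel_def)

text \<open>A sum of terms c u r w with u, w paths; if the r are relations, such sums are exactly the
  elements of the ideal they generate, and they serve below as explicit membership certificates.\<close>

definition sandwich_sum ::
  "('a \<Rightarrow> 'v) \<Rightarrow> ('k \<times> ('v \<times> 'a list) \<times> ('v \<times> 'a list \<Rightarrow> 'k) \<times> ('v \<times> 'a list)) list \<Rightarrow>
     'v \<times> 'a list \<Rightarrow> 'k::field" where
  "sandwich_sum t cs = (\<lambda>q. \<Sum>(c, u, r, w) \<leftarrow> cs. c * path_mult t (pe u) (path_mult t r (pe w)) q)"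

context
  fixes Ar :: "'a set" and s t :: "'a \<Rightarrow> 'v"
  assumes quiver: "t ` Ar \<subseteq> s ` Ar" "finite Ar"
begin

abbreviation (input) "KQ \<equiv> (path_ring Ar s t :: ('v \<times> 'a list \<Rightarrow> 'k::field) ring)"

lemma path_ring_scalar_carrier: "(\<lambda>p. c * \<one>\<^bsub>KQ\<^esub> p) \<in> carrier KQ"
proof -
  interpret ring KQ by (rule path_ring_is_ring[OF quiver])
  show ?thesis by (rule path_ring_scale_closed[OF one_closed])
qed

lemma path_ring_scalar_mult:
  assumes "z \<in> carrier KQ"
  shows "path_mult t (\<lambda>p. c * \<one>\<^bsub>KQ\<^esub> p) z = (\<lambda>q. c * z q)"
proof -
  interpret ring KQ by (rule path_ring_is_ring[OF quiver])
  show ?thesis using l_one[OF assms] by (simp add: path_mult_scale_left path_ring_mult)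
qed

lemma path_ring_minus:
  assumes x: "x \<in> carrier KQ" and y: "y \<in> carrier KQ"
  shows "x \<ominus>\<^bsub>KQ\<^esub> y = (\<lambda>q. x q - y q)"
proof -
  interpret ring KQ by (rule path_ring_is_ring[OF quiver])
  have "\<ominus>\<^bsub>KQ\<^esub> y = (\<lambda>q. - y q)"
    using path_ring_scale_closed[OF y, of "-1"] y
    by (intro minus_equality) (simp_all add: path_ring_add path_ring_zero)
  then show ?thesis by (simp add: a_minus_def path_ring_add)
qed

lemma ideal_lincomb_closed:
  assumes I: "ideal I KQ" and x: "x \<in> I" and y: "y \<in> I"
  shows "(\<lambda>q. a * x q + b * y q) \<in> I"
proof -
  interpret ideal I KQ by (rule I)
  have scale: "(\<lambda>q. c * z q) \<in> I" if "z \<in> I" for c z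
    using I_l_closed[OF that path_ring_scalar_carrier, of c] path_ring_scalar_mult[OF Icarr[OF that]]
    by (simp add: path_ring_mult)
  show ?thesis
    using additive_subgroup.a_closed[OF ideal.axioms(1)[OF I] scale[OF x] scale[OF y]]
    by (simp add: path_ring_add)
qed

lemma path_ring_basis_sum_closed:
  fixes c :: "'v \<times> 'a list \<Rightarrow> 'k::field"
  assumes "finite S" "\<And>p. p \<in> S \<Longrightarrow> valid_path Ar s t p"
  shows "(\<lambda>r. \<Sum>p\<in>S. c p * pe p r) \<in> carrier KQ"
proof (rule path_ring_carrierI[OF assms(1)])
  fix r assume "(\<Sum>p\<in>S. c p * pe p r) \<noteq> 0"
  then obtain p where "p \<in> S" "c p * pe p r \<noteq> 0"
    by (rule sum.not_neutral_contains_not_neutral)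
  then show "r \<in> S \<and> valid_path Ar s t r" using assms(2) by (auto simp: pe_def split: if_splits)
qed

lemma path_ring_pe_induct:
  fixes P :: "('v \<times> 'a list \<Rightarrow> 'k::field) \<Rightarrow> bool"
  assumes mult: "\<And>x y. x \<in> carrier KQ \<Longrightarrow> y \<in> carrier KQ \<Longrightarrow> P x \<Longrightarrow> P y \<Longrightarrow> P (path_mult t x y)"
    and vertex: "\<And>v. v \<in> qverts Ar s \<Longrightarrow> P (pe (v, []))"
    and arrow: "\<And>a. a \<in> Ar \<Longrightarrow> P (pe (s a, [a]))"
  shows "valid_path Ar s t (v, as) \<Longrightarrow> P (pe (v, as))"
proof (induction as arbitrary: v)
  case Nil
  then show ?case using vertex by (simp add: valid_path_def)
next
  case (Cons a as)
  then have a: "a \<in> Ar" "s a = v" and as: "valid_path Ar s t (t a, as)"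
    by (simp_all add: valid_path_Cons_iff[OF quiver(1)])
  then have "valid_path Ar s t (s a, [a])"
    by (auto simp: valid_path_Cons_iff[OF quiver(1)] valid_path_def qverts_def)
  then have "P (path_mult t (pe (s a, [a])) (pe (t a, as)))"
    using mult[OF pe_carrier pe_carrier[OF as] arrow[OF a(1)] Cons.IH[OF as]] by blast
  then show ?case using a by (simp add: pe_mult pend_def)
qed

lemma path_ring_induct [consumes 1, case_names add mult scalar vertex arrow]:
  fixes P :: "('v \<times> 'a list \<Rightarrow> 'k::field) \<Rightarrow> bool"
  assumes x: "x \<in> carrier KQ"
    and add: "\<And>x y. x \<in> carrier KQ \<Longrightarrow> y \<in> carrier KQ \<Longrightarrow> P x \<Longrightarrow> P y \<Longrightarrow> P (\<lambda>p. x p + y p)"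
    and mult: "\<And>x y. x \<in> carrier KQ \<Longrightarrow> y \<in> carrier KQ \<Longrightarrow> P x \<Longrightarrow> P y \<Longrightarrow> P (path_mult t x y)"
    and scalar: "\<And>c. P (\<lambda>p. c * \<one>\<^bsub>KQ\<^esub> p)"
    and vertex: "\<And>v. v \<in> qverts Ar s \<Longrightarrow> P (pe (v, []))"
    and arrow: "\<And>a. a \<in> Ar \<Longrightarrow> P (pe (s a, [a]))"
  shows "P x"
proof -
  have scaled_path: "P (\<lambda>r. c * pe p r)" if p: "valid_path Ar s t p" for c p
  proof -
    have "P (pe p)"
      using path_ring_pe_induct[of P, OF mult vertex arrow, of "fst p" "snd p"] p by simp
    then have "P (path_mult t (\<lambda>p. c * \<one>\<^bsub>KQ\<^esub> p) (pe p))"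
      by (rule mult[OF path_ring_scalar_carrier pe_carrier[OF p] scalar])
    then show ?thesis
      unfolding path_ring_scalar_mult[OF pe_carrier[OF p]] .
  qed
  have "P (\<lambda>r. \<Sum>p\<in>S. x p * pe p r)" if "finite S" "S \<subseteq> {p. x p \<noteq> 0}" for S
    using that
  proof (induction S rule: finite_induct)
    case empty
    then show ?case using scalar[of 0] by simp
  next
    case (insert p S)
    then have p: "valid_path Ar s t p" using path_ring_carrierD(2)[OF x] by blast
    have "(\<lambda>r. \<Sum>p\<in>S. x p * pe p r) \<in> carrier KQ"
      using insert path_ring_carrierD(2)[OF x] by (intro path_ring_basis_sum_closed) auto
    moreover have "P (\<lambda>r. \<Sum>p\<in>S. x p * pe p r)" using insert by blast
    ultimately have "P (\<lambda>r. x p * pe p r + (\<Sum>p\<in>S. x p * pe p r))"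
      by (rule add[OF path_ring_scale_closed[OF pe_carrier[OF p]] _ scaled_path[OF p]])
    then show ?case using insert(1,2) by simp
  qed
  from this[OF path_ring_carrierD(1)[OF x]] show ?thesis
    by (subst path_expansion[OF path_ring_carrierD(1)[OF x]]) simp
qed

lemma path_ring_hom_eqI:
  fixes Q :: "('c, 'd) ring_scheme" and f g :: "('v \<times> 'a list \<Rightarrow> 'k::field) \<Rightarrow> 'c"
  assumes f: "f \<in> ring_hom KQ Q" and g: "g \<in> ring_hom KQ Q"
    and scalar: "\<And>c. f (\<lambda>p. c * \<one>\<^bsub>KQ\<^esub> p) = g (\<lambda>p. c * \<one>\<^bsub>KQ\<^esub> p)"
    and vertex: "\<And>v. v \<in> qverts Ar s \<Longrightarrow> f (pe (v, [])) = g (pe (v, []))"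
    and arrow: "\<And>a. a \<in> Ar \<Longrightarrow> f (pe (s a, [a])) = g (pe (s a, [a]))"
    and x: "x \<in> carrier KQ"
  shows "f x = g x"
  using x
proof (induction rule: path_ring_induct)
  case (add x y)
  then show ?case
    using ring_hom_add[OF f, of x y] ring_hom_add[OF g, of x y] by (simp add: path_ring_add)
next
  case (mult x y)
  then show ?case
    using ring_hom_mult[OF f, of x y] ring_hom_mult[OF g, of x y] by (simp add: path_ring_mult)
qed (use scalar vertex arrow in simp_all)

lemma sandwich_sum_in_genideal:
  assumes G: "G \<subseteq> carrier KQ"
    and cs: "\<forall>(c, u, r, w) \<in> set cs. r \<in> G \<and> valid_path Ar s t u \<and> valid_path Ar s t w"
  shows "sandwich_sum t cs \<in> genideal KQ G"
  using cs
proof (induction cs)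
  case Nil
  interpret ring KQ by (rule path_ring_is_ring[OF quiver])
  show ?case
    using additive_subgroup.zero_closed[OF ideal.axioms(1)[OF genideal_ideal[OF G]]]
    by (simp add: sandwich_sum_def path_ring_zero)
next
  case (Cons d cs)
  interpret ring KQ by (rule path_ring_is_ring[OF quiver])
  obtain c u r w where d: "d = (c, u, r, w)" by (cases d)
  interpret I: ideal "genideal KQ G" KQ by (rule genideal_ideal[OF G])
  have "r \<in> genideal KQ G" using Cons.prems G genideal_self unfolding d by auto
  moreover have "pe u \<in> carrier KQ" "pe w \<in> carrier KQ"
    using Cons.prems unfolding d by (simp_all add: pe_carrier)
  ultimately have "path_mult t (pe u) (path_mult t r (pe w)) \<in> genideal KQ G"
    using I.I_l_closed[OF I.I_r_closed] unfolding path_ring_mult by blast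
  from ideal_lincomb_closed[OF I.ideal_axioms this Cons.IH, of c 1] Cons.prems
  show ?case by (simp add: sandwich_sum_def d)
qed

end

lemmas path_calc = sandwich_sum_def path_mult_comm_rel_left path_mult_comm_rel_right path_mult_linear
  pe_mult pend_def

section \<open>Algebra maps given by images of arrows\<close>

primrec path_image ::
  "('b \<Rightarrow> 'v) \<Rightarrow> ('a \<Rightarrow> 'v) \<Rightarrow> ('a \<Rightarrow> ('v \<times> 'b list \<Rightarrow> 'k::field)) \<Rightarrow> 'v \<Rightarrow> 'a list \<Rightarrow> ('v \<times> 'b list \<Rightarrow> 'k)"
where
  "path_image t2 t1 \<phi> v [] = pe (v, [])"
| "path_image t2 t1 \<phi> v (a # as) = path_mult t2 (\<phi> a) (path_image t2 t1 \<phi> (t1 a) as)"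

definition path_hom ::
  "('b \<Rightarrow> 'v) \<Rightarrow> ('a \<Rightarrow> 'v) \<Rightarrow> ('a \<Rightarrow> ('v \<times> 'b list \<Rightarrow> 'k::field)) \<Rightarrow>
     ('v \<times> 'a list \<Rightarrow> 'k) \<Rightarrow> ('v \<times> 'b list \<Rightarrow> 'k)" where
  "path_hom t2 t1 \<phi> x = (\<lambda>q. \<Sum>p | x p \<noteq> 0. x p * path_image t2 t1 \<phi> (fst p) (snd p) q)"

locale arrow_assignment =
  fixes Ar1 :: "'a set" and s1 t1 :: "'a \<Rightarrow> 'v"
    and Ar2 :: "'b set" and s2 t2 :: "'b \<Rightarrow> 'v"
    and \<phi> :: "'a \<Rightarrow> ('v \<times> 'b list \<Rightarrow> 'k::field)"
  assumes quiver1: "t1 ` Ar1 \<subseteq> s1 ` Ar1" "finite Ar1"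
    and quiver2: "t2 ` Ar2 \<subseteq> s2 ` Ar2" "finite Ar2"
    and same_vertices: "qverts Ar1 s1 = qverts Ar2 s2"
    and arrow_image_carrier: "\<And>a. a \<in> Ar1 \<Longrightarrow> \<phi> a \<in> carrier (path_ring Ar2 s2 t2)"
    and arrow_image_starts: "\<And>a. a \<in> Ar1 \<Longrightarrow> starts_at (s1 a) (\<phi> a)"
    and arrow_image_ends: "\<And>a. a \<in> Ar1 \<Longrightarrow> ends_at t2 (t1 a) (\<phi> a)"
begin

abbreviation "R1 \<equiv> (path_ring Ar1 s1 t1 :: ('v \<times> 'a list \<Rightarrow> 'k) ring)"
abbreviation "R2 \<equiv> (path_ring Ar2 s2 t2 :: ('v \<times> 'b list \<Rightarrow> 'k) ring)"
abbreviation "F \<equiv> path_image t2 t1 \<phi>"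
abbreviation "\<Phi> \<equiv> path_hom t2 t1 \<phi>"

lemma path_image_props:
  "valid_path Ar1 s1 t1 (v, as) \<Longrightarrow>
     F v as \<in> carrier R2 \<and> starts_at v (F v as) \<and> ends_at t2 (pend t1 (v, as)) (F v as)"
proof (induction as arbitrary: v)
  case Nil
  then have "valid_path Ar2 s2 t2 (v, [])"
    using same_vertices by (simp add: valid_path_def)
  then show ?case by (simp add: pe_carrier starts_at_pe ends_at_pe)
next
  case (Cons a as)
  then have a: "a \<in> Ar1" "s1 a = v" and as: "valid_path Ar1 s1 t1 (t1 a, as)"
    by (simp_all add: valid_path_Cons_iff[OF quiver1(1)])
  with Cons.IH[OF as] show ?case
    by (auto simp: path_mult_closed arrow_image_carrier starts_at_path_mult arrow_image_starts
        ends_at_path_mult pend_Cons)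
qed

lemma path_image_append:
  "valid_path Ar1 s1 t1 (v, as @ bs) \<Longrightarrow> F v (as @ bs) = path_mult t2 (F v as) (F (pend t1 (v, as)) bs)"
proof (induction as arbitrary: v)
  case Nil
  then show ?case using path_image_props path_mult_vertex_left by (simp add: path_mult_vertex_left)
next
  case (Cons a as)
  then have "valid_path Ar1 s1 t1 (t1 a, as @ bs)"
    by (simp add: valid_path_Cons_iff[OF quiver1(1)])
  then show ?case using Cons.IH by (simp add: path_mult_assoc pend_Cons)
qed

lemma path_image_mult:
  assumes p: "valid_path Ar1 s1 t1 p" and q: "valid_path Ar1 s1 t1 q"
  shows "path_mult t2 (F (fst p) (snd p)) (F (fst q) (snd q)) =
     (if pend t1 p = fst q then F (fst p) (snd p @ snd q) else (\<lambda>_. 0))"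
proof (cases "pend t1 p = fst q")
  case True
  obtain v as w bs where [simp]: "p = (v, as)" "q = (w, bs)" by (cases p, cases q)
  have "valid_path Ar1 s1 t1 (v, as @ bs)"
    using valid_path_append[of Ar1 s1 t1 v "length as" "as @ bs"] p q True by simp
  then show ?thesis using True path_image_append by simp
next
  case False
  have "path_mult t2 (F (fst p) (snd p)) (F (fst q) (snd q)) = (\<lambda>_. 0)"
    using path_image_props[of "fst p" "snd p"] path_image_props[of "fst q" "snd q"] p q False
    by (intro path_mult_disjoint) auto
  with False show ?thesis by simp
qed

lemma path_hom_eq_sum:
  assumes "finite P" "{p. x p \<noteq> 0} \<subseteq> P"
  shows "\<Phi> x q = (\<Sum>p\<in>P. x p * F (fst p) (snd p) q)"
  unfolding path_hom_def using assms by (intro sum.mono_neutral_left) auto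

lemma path_hom_sum:
  assumes "finite A" "\<And>j. j \<in> A \<Longrightarrow> z j \<in> carrier R1"
  shows "\<Phi> (\<lambda>r. \<Sum>j\<in>A. c j * z j r) = (\<lambda>q. \<Sum>j\<in>A. c j * \<Phi> (z j) q)"
proof (rule ext)
  fix q
  define P where "P = (\<Union>j\<in>A. {p. z j p \<noteq> 0})"
  have P: "finite P" using assms path_ring_carrierD(1) unfolding P_def by blast
  have "{p. (\<Sum>j\<in>A. c j * z j p) \<noteq> 0} \<subseteq> P"
  proof
    fix p assume "p \<in> {p. (\<Sum>j\<in>A. c j * z j p) \<noteq> 0}"
    then obtain j where "j \<in> A" "c j * z j p \<noteq> 0"
      by (auto elim: sum.not_neutral_contains_not_neutral)
    then show "p \<in> P" unfolding P_def by auto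
  qed
  then have "\<Phi> (\<lambda>r. \<Sum>j\<in>A. c j * z j r) q = (\<Sum>p\<in>P. (\<Sum>j\<in>A. c j * z j p) * F (fst p) (snd p) q)"
    using path_hom_eq_sum[OF P] by simp
  also have "\<dots> = (\<Sum>j\<in>A. c j * (\<Sum>p\<in>P. z j p * F (fst p) (snd p) q))"
    by (simp add: sum_distrib_right sum_distrib_left mult.assoc sum.swap[of _ P A])
  also have "\<dots> = (\<Sum>j\<in>A. c j * \<Phi> (z j) q)"
  proof (intro sum.cong refl)
    fix j assume "j \<in> A"
    then have "{p. z j p \<noteq> 0} \<subseteq> P" unfolding P_def by auto
    then show "c j * (\<Sum>p\<in>P. z j p * F (fst p) (snd p) q) = c j * \<Phi> (z j) q"
      using path_hom_eq_sum[OF P] by simp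
  qed
  finally show "\<Phi> (\<lambda>r. \<Sum>j\<in>A. c j * z j r) q = (\<Sum>j\<in>A. c j * \<Phi> (z j) q)" .
qed

lemma path_hom_lincomb:
  assumes "x \<in> carrier R1" "y \<in> carrier R1"
  shows "\<Phi> (\<lambda>p. a * x p + b * y p) = (\<lambda>q. a * \<Phi> x q + b * \<Phi> y q)"
proof (rule ext)
  fix q
  define P where "P = {p. x p \<noteq> 0} \<union> {p. y p \<noteq> 0}"
  have P: "finite P" using assms path_ring_carrierD(1) unfolding P_def by auto
  have "\<Phi> (\<lambda>p. a * x p + b * y p) q = (\<Sum>p\<in>P. (a * x p + b * y p) * F (fst p) (snd p) q)"
    using P by (intro path_hom_eq_sum) (auto simp: P_def)
  also have "\<dots> = a * (\<Sum>p\<in>P. x p * F (fst p) (snd p) q) + b * (\<Sum>p\<in>P. y p * F (fst p) (snd p) q)"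
    by (simp add: algebra_simps sum.distrib sum_distrib_left)
  also have "\<dots> = a * \<Phi> x q + b * \<Phi> y q"
    using path_hom_eq_sum[OF P, of x q] path_hom_eq_sum[OF P, of y q] by (simp add: P_def subset_iff)
  finally show "\<Phi> (\<lambda>p. a * x p + b * y p) q = a * \<Phi> x q + b * \<Phi> y q" .
qed

lemma path_hom_pe: "\<Phi> (pe p) = F (fst p) (snd p)"
proof -
  have "{q. pe p q \<noteq> (0::'k)} = {p}" by (auto simp: pe_def)
  then show ?thesis unfolding path_hom_def by (simp add: pe_def)
qed

lemma path_hom_zero: "\<Phi> (\<lambda>_. 0) = (\<lambda>_. 0)"
  by (simp add: path_hom_def)

lemma path_hom_mult:
  assumes x: "x \<in> carrier R1" and y: "y \<in> carrier R1"
  shows "\<Phi> (path_mult t1 x y) = path_mult t2 (\<Phi> x) (\<Phi> y)"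
proof -
  define X where "X = {p. x p \<noteq> 0}"
  define Y where "Y = {p. y p \<noteq> 0}"
  have fin: "finite X" "finite Y" and valid: "\<And>p. p \<in> X \<union> Y \<Longrightarrow> valid_path Ar1 s1 t1 p"
    using x y path_ring_carrierD unfolding X_def Y_def by blast+
  have "path_mult t1 x y = path_mult t1 (\<lambda>r. \<Sum>p\<in>X. x p * pe p r) (\<lambda>r. \<Sum>q\<in>Y. y q * pe q r)"
    using path_expansion[of x] path_expansion[of y] fin unfolding X_def Y_def by simp
  also have "\<dots> = (\<lambda>r. \<Sum>pq\<in>X \<times> Y. (x (fst pq) * y (snd pq)) * path_mult t1 (pe (fst pq)) (pe (snd pq)) r)"
    by (simp add: path_mult_sum sum.cartesian_product case_prod_beta)
  finally have "\<Phi> (path_mult t1 x y) = \<Phi> \<dots>" by (rule arg_cong)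
  also have "\<dots> = (\<lambda>r. \<Sum>pq\<in>X \<times> Y. (x (fst pq) * y (snd pq)) * \<Phi> (path_mult t1 (pe (fst pq)) (pe (snd pq))) r)"
    using fin valid by (intro path_hom_sum) (auto intro!: path_mult_closed pe_carrier)
  also have "\<dots> = (\<lambda>r. \<Sum>pq\<in>X \<times> Y. (x (fst pq) * y (snd pq)) *
      path_mult t2 (F (fst (fst pq)) (snd (fst pq))) (F (fst (snd pq)) (snd (snd pq))) r)"
  proof (intro ext sum.cong refl)
    fix r pq assume "pq \<in> X \<times> Y"
    moreover obtain v as w bs where pq: "pq = ((v, as), (w, bs))" by (metis prod.collapse)
    ultimately have "valid_path Ar1 s1 t1 (v, as)" "valid_path Ar1 s1 t1 (w, bs)" using valid by auto
    then show "x (fst pq) * y (snd pq) * \<Phi> (path_mult t1 (pe (fst pq)) (pe (snd pq))) r =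
        x (fst pq) * y (snd pq) * path_mult t2 (F (fst (fst pq)) (snd (fst pq))) (F (fst (snd pq)) (snd (snd pq))) r"
      using path_image_mult[of "(v, as)" "(w, bs)"] by (simp add: pq pe_mult path_hom_pe path_hom_zero)
  qed
  also have "\<dots> = path_mult t2 (\<lambda>r. \<Sum>p\<in>X. x p * F (fst p) (snd p) r) (\<lambda>r. \<Sum>q\<in>Y. y q * F (fst q) (snd q) r)"
    by (simp add: path_mult_sum sum.cartesian_product case_prod_beta)
  also have "\<dots> = path_mult t2 (\<Phi> x) (\<Phi> y)"
    unfolding path_hom_def X_def Y_def ..
  finally show ?thesis .
qed

lemma path_hom_carrier:
  assumes x: "x \<in> carrier R1"
  shows "\<Phi> x \<in> carrier R2"
proof -
  define X where "X = {p. x p \<noteq> 0}"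
  have X: "finite X" using x path_ring_carrierD(1) unfolding X_def by blast
  have F: "F (fst p) (snd p) \<in> carrier R2" if "p \<in> X" for p
    using path_image_props[of "fst p" "snd p"] path_ring_carrierD(2)[OF x, of p] that
    unfolding X_def by auto
  show ?thesis
  proof (rule path_ring_carrierI[where S = "\<Union>p\<in>X. {q. F (fst p) (snd p) q \<noteq> 0}"])
    show "finite (\<Union>p\<in>X. {q. F (fst p) (snd p) q \<noteq> 0})"
      using X F path_ring_carrierD(1) by blast
  next
    fix q assume "\<Phi> x q \<noteq> 0"
    then obtain p where "p \<in> X" "F (fst p) (snd p) q \<noteq> 0"
      unfolding path_hom_def X_def by (auto elim: sum.not_neutral_contains_not_neutral)
    then show "q \<in> (\<Union>p\<in>X. {q. F (fst p) (snd p) q \<noteq> 0}) \<and> valid_path Ar2 s2 t2 q"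
      using F path_ring_carrierD(2) by blast
  qed
qed

lemma path_hom_scalar:
  "\<Phi> (\<lambda>p. c * \<one>\<^bsub>R1\<^esub> p) = (\<lambda>q. c * \<one>\<^bsub>R2\<^esub> q)"
proof (rule ext)
  fix q :: "'v \<times> 'b list"
  let ?V = "qverts Ar1 s1"
  have V: "finite ?V" using quiver1(2) by (simp add: qverts_def)
  have "\<Phi> (\<lambda>p. c * \<one>\<^bsub>R1\<^esub> p) q = (\<Sum>p\<in>(\<lambda>v. (v, [])) ` ?V. c * \<one>\<^bsub>R1\<^esub> p * F (fst p) (snd p) q)"
    using V by (intro path_hom_eq_sum) (auto simp: path_ring_one)
  also have "\<dots> = (\<Sum>v\<in>?V. c * pe (v, []) q)"
    by (subst sum.reindex) (auto simp: inj_on_def path_ring_one intro!: sum.cong)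
  also have "\<dots> = (\<Sum>v\<in>?V. if v = fst q then c * (if snd q = [] then 1 else 0) else 0)"
    by (intro sum.cong refl) (cases q, auto simp: pe_def)
  also have "\<dots> = c * \<one>\<^bsub>R2\<^esub> q"
    using V same_vertices by (simp add: sum.delta' path_ring_one)
  finally show "\<Phi> (\<lambda>p. c * \<one>\<^bsub>R1\<^esub> p) q = c * \<one>\<^bsub>R2\<^esub> q" .
qed

lemma path_hom_is_ring_hom: "\<Phi> \<in> ring_hom R1 R2"
proof (rule ring_hom_memI)
  show "\<Phi> \<one>\<^bsub>R1\<^esub> = \<one>\<^bsub>R2\<^esub>"
    using path_hom_scalar[of 1] by simp
qed (auto simp: path_hom_carrier path_ring_mult path_hom_mult path_ring_add
    path_hom_lincomb[where a = 1 and b = 1, simplified])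

lemma path_hom_scale: "x \<in> carrier R1 \<Longrightarrow> \<Phi> (\<lambda>q. c * x q) = (\<lambda>q. c * \<Phi> x q)"
  using path_hom_lincomb[of x x c 0] by simp

lemma path_hom_comm_rel:
  assumes "valid_path Ar1 s1 t1 p" "valid_path Ar1 s1 t1 q"
  shows "\<Phi> (comm_rel p c q) = (\<lambda>x. F (fst p) (snd p) x - c * F (fst q) (snd q) x)"
  using path_hom_lincomb[OF pe_carrier pe_carrier, OF assms, of 1 "-c"]
  by (simp add: comm_rel_def path_hom_pe)

lemma path_hom_genideal:
  assumes G: "G \<subseteq> carrier R1" and J: "ideal J R2" and rels: "\<And>g. g \<in> G \<Longrightarrow> \<Phi> g \<in> J"
  shows "x \<in> genideal R1 G \<Longrightarrow> \<Phi> x \<in> J"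
proof -
  have "ring_hom_ring R1 R2 \<Phi>"
    using path_ring_is_ring[OF quiver1] path_ring_is_ring[OF quiver2] path_hom_is_ring_hom
    by (rule ring_hom_ringI2)
  then have "ideal {x \<in> carrier R1. \<Phi> x \<in> J} R1"
    using J by (rule ring_hom_ring.ideal_vimage)
  then have "genideal R1 G \<subseteq> {x \<in> carrier R1. \<Phi> x \<in> J}"
    using G rels by (intro ring.genideal_minimal[OF path_ring_is_ring[OF quiver1]]) auto
  then show "x \<in> genideal R1 G \<Longrightarrow> \<Phi> x \<in> J" by blast
qed

end

section \<open>Isomorphisms of quotients by generated ideals\<close>

context
  fixes R :: "('a, 'c) ring_scheme" and S :: "('b, 'd) ring_scheme"
    and I :: "'a set" and J :: "'b set" and \<Phi> :: "'a \<Rightarrow> 'b" and \<Psi> :: "'b \<Rightarrow> 'a"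
  assumes R: "ring R" and I: "ideal I R" and J: "ideal J S"
    and \<Phi>: "\<Phi> \<in> ring_hom R S" and \<Psi>: "\<Psi> \<in> ring_hom S R"
    and \<Phi>I: "\<And>x. x \<in> I \<Longrightarrow> \<Phi> x \<in> J" and \<Psi>J: "\<And>y. y \<in> J \<Longrightarrow> \<Psi> y \<in> I"
    and \<Psi>\<Phi>: "\<And>x. x \<in> carrier R \<Longrightarrow> I +>\<^bsub>R\<^esub> \<Psi> (\<Phi> x) = I +>\<^bsub>R\<^esub> x"
    and \<Phi>\<Psi>: "\<And>y. y \<in> carrier S \<Longrightarrow> J +>\<^bsub>S\<^esub> \<Phi> (\<Psi> y) = J +>\<^bsub>S\<^esub> y"
begin

lemma rcos_comp_kernel: "a_kernel R (S Quot J) (\<lambda>x. J +>\<^bsub>S\<^esub> \<Phi> x) = I"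
proof -
  interpret I: ideal I R by (rule I)
  interpret J: ideal J S by (rule J)
  show ?thesis
  proof (intro equalityI subsetI)
    fix x assume "x \<in> a_kernel R (S Quot J) (\<lambda>x. J +>\<^bsub>S\<^esub> \<Phi> x)"
    then have x: "x \<in> carrier R" and "J +>\<^bsub>S\<^esub> \<Phi> x = J"
      unfolding a_kernel_def' by (auto simp: FactRing_def)
    then have "\<Psi> (\<Phi> x) \<in> I"
      using J.a_rcos_self[OF ring_hom_closed[OF \<Phi> x]] \<Psi>J by simp
    then have "I +>\<^bsub>R\<^esub> x = I"
      using \<Psi>\<Phi>[OF x] I.a_rcos_const by simp
    then show "x \<in> I" using I.a_rcos_self[OF x] by simp
  next
    fix x assume "x \<in> I"
    then show "x \<in> a_kernel R (S Quot J) (\<lambda>x. J +>\<^bsub>S\<^esub> \<Phi> x)"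
      using J.a_rcos_const[OF \<Phi>I] unfolding a_kernel_def' by (auto simp: FactRing_def)
  qed
qed

lemma rcos_comp_surj: "(\<lambda>x. J +>\<^bsub>S\<^esub> \<Phi> x) ` carrier R = carrier (S Quot J)"
proof (intro equalityI subsetI)
  fix Y assume "Y \<in> (\<lambda>x. J +>\<^bsub>S\<^esub> \<Phi> x) ` carrier R"
  then show "Y \<in> carrier (S Quot J)"
    using ring_hom_closed[OF \<Phi>] unfolding FactRing_def A_RCOSETS_def' by auto
next
  fix Y assume "Y \<in> carrier (S Quot J)"
  then obtain y where "y \<in> carrier S" "Y = J +>\<^bsub>S\<^esub> y"
    unfolding FactRing_def A_RCOSETS_def' by auto
  then show "Y \<in> (\<lambda>x. J +>\<^bsub>S\<^esub> \<Phi> x) ` carrier R"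
    using \<Phi>\<Psi> ring_hom_closed[OF \<Psi>] by (intro image_eqI[where x = "\<Psi> y"]) auto
qed

lemma quot_iso_from_inverse_homs:
  "\<exists>h \<in> ring_iso (R Quot I) (S Quot J). \<forall>x\<in>carrier R. h (I +>\<^bsub>R\<^esub> x) = J +>\<^bsub>S\<^esub> \<Phi> x"
proof -
  interpret J: ideal J S by (rule J)
  define \<rho> where "\<rho> = (\<lambda>x. J +>\<^bsub>S\<^esub> \<Phi> x)"
  have "((+>\<^bsub>S\<^esub>) J) \<circ> \<Phi> \<in> ring_hom R (S Quot J)"
    by (rule ring_hom_trans[OF \<Phi> J.rcos_ring_hom])
  then have \<rho>: "ring_hom_ring R (S Quot J) \<rho>"
    unfolding \<rho>_def comp_def by (rule ring_hom_ringI2[OF R J.quotient_is_ring])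
  have "(\<lambda>X. the_elem (\<rho> ` X)) \<in> ring_iso (R Quot I) (S Quot J)"
    using ring_hom_ring.FactRing_iso_set[OF \<rho> rcos_comp_surj[folded \<rho>_def]]
    unfolding rcos_comp_kernel[folded \<rho>_def] .
  moreover have "the_elem (\<rho> ` (I +>\<^bsub>R\<^esub> x)) = \<rho> x" if "x \<in> carrier R" for x
    using ring_hom_ring.the_elem_simp[OF \<rho> that] unfolding rcos_comp_kernel[folded \<rho>_def] .
  ultimately have "\<exists>h \<in> ring_iso (R Quot I) (S Quot J). \<forall>x\<in>carrier R. h (I +>\<^bsub>R\<^esub> x) = \<rho> x"
    by (intro bexI[of _ "\<lambda>X. the_elem (\<rho> ` X)"]) simp_all
  then show ?thesis unfolding \<rho>_def .
qed

end

lemma path_hom_round_trip: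
  fixes \<phi> :: "'a \<Rightarrow> ('v \<times> 'b list \<Rightarrow> 'k::field)" and \<psi> :: "'b \<Rightarrow> ('v \<times> 'a list \<Rightarrow> 'k)"
  assumes \<phi>: "arrow_assignment Ar1 s1 t1 Ar2 s2 t2 \<phi>"
    and \<psi>: "arrow_assignment Ar2 s2 t2 Ar1 s1 t1 \<psi>"
    and I: "ideal I (path_ring Ar1 s1 t1)"
    and arrows: "\<And>a. a \<in> Ar1 \<Longrightarrow>
      (\<lambda>q. path_hom t1 t2 \<psi> (path_hom t2 t1 \<phi> (pe (s1 a, [a]))) q - pe (s1 a, [a]) q) \<in> I"
    and x: "x \<in> carrier (path_ring Ar1 s1 t1)"
  shows "I +>\<^bsub>path_ring Ar1 s1 t1\<^esub> path_hom t1 t2 \<psi> (path_hom t2 t1 \<phi> x) = I +>\<^bsub>path_ring Ar1 s1 t1\<^esub> x"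
proof -
  interpret \<phi>: arrow_assignment Ar1 s1 t1 Ar2 s2 t2 \<phi> by (rule \<phi>)
  interpret \<psi>: arrow_assignment Ar2 s2 t2 Ar1 s1 t1 \<psi> by (rule \<psi>)
  interpret R1: ring \<phi>.R1 by (rule path_ring_is_ring[OF \<phi>.quiver1])
  interpret I: ideal I \<phi>.R1 by (rule I)
  have "(\<lambda>x. I +>\<^bsub>\<phi>.R1\<^esub> \<psi>.\<Phi> (\<phi>.\<Phi> x)) \<in> ring_hom \<phi>.R1 (\<phi>.R1 Quot I)"
    using ring_hom_trans[OF ring_hom_trans[OF \<phi>.path_hom_is_ring_hom \<psi>.path_hom_is_ring_hom]
        I.rcos_ring_hom]
    by (simp add: comp_def)
  then show ?thesis
  proof (rule path_ring_hom_eqI[OF \<phi>.quiver1 _ I.rcos_ring_hom _ _ _ x])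
    fix c :: 'k
    show "I +>\<^bsub>\<phi>.R1\<^esub> \<psi>.\<Phi> (\<phi>.\<Phi> (\<lambda>p. c * \<one>\<^bsub>\<phi>.R1\<^esub> p)) = I +>\<^bsub>\<phi>.R1\<^esub> (\<lambda>p. c * \<one>\<^bsub>\<phi>.R1\<^esub> p)"
      by (simp add: \<phi>.path_hom_scalar \<psi>.path_hom_scalar)
  next
    fix v
    show "I +>\<^bsub>\<phi>.R1\<^esub> \<psi>.\<Phi> (\<phi>.\<Phi> (pe (v, []))) = I +>\<^bsub>\<phi>.R1\<^esub> pe (v, [])"
      by (simp add: \<phi>.path_hom_pe \<psi>.path_hom_pe)
  next
    fix a assume a: "a \<in> Ar1"
    then have "valid_path Ar1 s1 t1 (s1 a, [a])"
      using valid_path_Cons_iff[OF \<phi>.quiver1(1)] \<phi>.quiver1(1)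
      by (auto simp: valid_path_def qverts_def)
    then have "pe (s1 a, [a]) \<in> carrier \<phi>.R1" by (rule pe_carrier)
    moreover have "\<psi>.\<Phi> (\<phi>.\<Phi> (pe (s1 a, [a]))) \<in> carrier \<phi>.R1"
      using \<open>pe _ \<in> carrier _\<close> by (intro \<psi>.path_hom_carrier \<phi>.path_hom_carrier)
    ultimately show "I +>\<^bsub>\<phi>.R1\<^esub> \<psi>.\<Phi> (\<phi>.\<Phi> (pe (s1 a, [a]))) = I +>\<^bsub>\<phi>.R1\<^esub> pe (s1 a, [a])"
      using R1.quotient_eq_iff_same_a_r_cos[OF I] arrows[OF a]
      by (simp add: path_ring_minus[OF \<phi>.quiver1])
  qed
qed

lemma kalg_quot_iso_by_arrow_maps:
  fixes Ar1 :: "'a set" and s1 t1 :: "'a \<Rightarrow> 'v" and Ar2 :: "'b set" and s2 t2 :: "'b \<Rightarrow> 'v"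
    and \<phi> :: "'a \<Rightarrow> ('v \<times> 'b list \<Rightarrow> 'k::field)" and \<psi> :: "'b \<Rightarrow> ('v \<times> 'a list \<Rightarrow> 'k)"
  defines "R1 \<equiv> (path_ring Ar1 s1 t1 :: ('v \<times> 'a list \<Rightarrow> 'k) ring)"
    and "R2 \<equiv> (path_ring Ar2 s2 t2 :: ('v \<times> 'b list \<Rightarrow> 'k) ring)"
  assumes \<phi>: "arrow_assignment Ar1 s1 t1 Ar2 s2 t2 \<phi>"
    and \<psi>: "arrow_assignment Ar2 s2 t2 Ar1 s1 t1 \<psi>"
    and G1: "G1 \<subseteq> carrier R1" and G2: "G2 \<subseteq> carrier R2"
    and \<phi>_rels: "\<And>g. g \<in> G1 \<Longrightarrow> path_hom t2 t1 \<phi> g \<in> genideal R2 G2"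
    and \<psi>_rels: "\<And>g. g \<in> G2 \<Longrightarrow> path_hom t1 t2 \<psi> g \<in> genideal R1 G1"
    and \<psi>\<phi>_arrows: "\<And>a. a \<in> Ar1 \<Longrightarrow>
      (\<lambda>q. path_hom t1 t2 \<psi> (path_hom t2 t1 \<phi> (pe (s1 a, [a]))) q - pe (s1 a, [a]) q) \<in> genideal R1 G1"
    and \<phi>\<psi>_arrows: "\<And>b. b \<in> Ar2 \<Longrightarrow>
      (\<lambda>q. path_hom t2 t1 \<phi> (path_hom t1 t2 \<psi> (pe (s2 b, [b]))) q - pe (s2 b, [b]) q) \<in> genideal R2 G2"
  shows "kalg_quot_iso R1 (genideal R1 G1) R2 (genideal R2 G2)"
proof -
  interpret \<phi>: arrow_assignment Ar1 s1 t1 Ar2 s2 t2 \<phi> by (rule \<phi>)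
  interpret \<psi>: arrow_assignment Ar2 s2 t2 Ar1 s1 t1 \<psi> by (rule \<psi>)
  have R1: "ring R1" and R2: "ring R2"
    unfolding R1_def R2_def by (rule path_ring_is_ring[OF \<phi>.quiver1], rule path_ring_is_ring[OF \<phi>.quiver2])
  have I: "ideal (genideal R1 G1) R1" and J: "ideal (genideal R2 G2) R2"
    using ring.genideal_ideal[OF R1 G1] ring.genideal_ideal[OF R2 G2] .
  have \<Phi>: "\<phi>.\<Phi> \<in> ring_hom R1 R2" and \<Psi>: "\<psi>.\<Phi> \<in> ring_hom R2 R1"
    unfolding R1_def R2_def by (rule \<phi>.path_hom_is_ring_hom, rule \<psi>.path_hom_is_ring_hom)
  have \<Phi>I: "\<And>x. x \<in> genideal R1 G1 \<Longrightarrow> \<phi>.\<Phi> x \<in> genideal R2 G2"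
    using \<phi>.path_hom_genideal G1 J \<phi>_rels unfolding R1_def R2_def by blast
  have \<Psi>J: "\<And>y. y \<in> genideal R2 G2 \<Longrightarrow> \<psi>.\<Phi> y \<in> genideal R1 G1"
    using \<psi>.path_hom_genideal G2 I \<psi>_rels unfolding R1_def R2_def by blast
  have \<Psi>\<Phi>: "\<And>x. x \<in> carrier R1 \<Longrightarrow> genideal R1 G1 +>\<^bsub>R1\<^esub> \<psi>.\<Phi> (\<phi>.\<Phi> x) = genideal R1 G1 +>\<^bsub>R1\<^esub> x"
    using path_hom_round_trip[OF \<phi> \<psi>] I \<psi>\<phi>_arrows unfolding R1_def by blast
  have \<Phi>\<Psi>: "\<And>y. y \<in> carrier R2 \<Longrightarrow> genideal R2 G2 +>\<^bsub>R2\<^esub> \<phi>.\<Phi> (\<psi>.\<Phi> y) = genideal R2 G2 +>\<^bsub>R2\<^esub> y"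
    using path_hom_round_trip[OF \<psi> \<phi>] J \<phi>\<psi>_arrows unfolding R2_def by blast
  obtain h where h: "h \<in> ring_iso (R1 Quot genideal R1 G1) (R2 Quot genideal R2 G2)"
    and h_cos: "\<And>x. x \<in> carrier R1 \<Longrightarrow> h (genideal R1 G1 +>\<^bsub>R1\<^esub> x) = genideal R2 G2 +>\<^bsub>R2\<^esub> \<phi>.\<Phi> x"
    using quot_iso_from_inverse_homs[OF R1 I J \<Phi> \<Psi>] \<Phi>I \<Psi>J \<Psi>\<Phi> \<Phi>\<Psi> by blast
  have "(\<lambda>p. c * \<one>\<^bsub>R1\<^esub> p) \<in> carrier R1" and "\<phi>.\<Phi> (\<lambda>p. c * \<one>\<^bsub>R1\<^esub> p) = (\<lambda>q. c * \<one>\<^bsub>R2\<^esub> q)"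
    for c :: 'k
    unfolding R1_def R2_def by (rule path_ring_scalar_carrier[OF \<phi>.quiver1], rule \<phi>.path_hom_scalar)
  with h_cos have "h (genideal R1 G1 +>\<^bsub>R1\<^esub> (\<lambda>p. c * \<one>\<^bsub>R1\<^esub> p)) =
      genideal R2 G2 +>\<^bsub>R2\<^esub> (\<lambda>q. c * \<one>\<^bsub>R2\<^esub> q)" for c :: 'k
    by simp
  with h show ?thesis unfolding kalg_quot_iso_def by blast
qed

section \<open>The algebras T(\<mu>) and \<Sigma>(\<lambda>)\<close>

lemma UNIV_arrT: "(UNIV :: arrT set) = {al1, al2, al3, be1, be2, be3}"
  using arrT.exhaust by auto

lemma UNIV_arrS: "(UNIV :: arrS set) = {alS, beS, gaS, siS, deS, etS}"
  using arrS.exhaust by auto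

lemma qbar_eqI:
  assumes "b \<in> Ar" "s b = s a" "b \<noteq> a" "\<And>c. c \<in> Ar \<Longrightarrow> s c = s a \<Longrightarrow> c \<noteq> a \<Longrightarrow> c = b"
  shows "qbar Ar s a = b"
  unfolding qbar_def using assms by blast

lemma gorb_len_eqI:
  assumes "0 < n" "(gperm Ar s f ^^ n) a = a" "\<And>k. 0 < k \<Longrightarrow> k < n \<Longrightarrow> (gperm Ar s f ^^ k) a \<noteq> a"
  shows "gorb_len Ar s f a = n"
  unfolding gorb_len_def using assms by (intro Least_equality) (auto simp: not_less[symmetric])

lemma qbar_T:
  "qbar UNIV sT a = (case a of al1 \<Rightarrow> be3 | al2 \<Rightarrow> be1 | al3 \<Rightarrow> be2 | be1 \<Rightarrow> al2 | be2 \<Rightarrow> al3 | be3 \<Rightarrow> al1)"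
proof (rule qbar_eqI)
  fix c assume "sT c = sT a" "c \<noteq> a"
  then show "c = (case a of al1 \<Rightarrow> be3 | al2 \<Rightarrow> be1 | al3 \<Rightarrow> be2 | be1 \<Rightarrow> al2 | be2 \<Rightarrow> al3 | be3 \<Rightarrow> al1)"
    by (cases a; cases c) simp_all
qed (cases a; simp)+

lemma qbar_S:
  "qbar UNIV sS a = (case a of alS \<Rightarrow> beS | beS \<Rightarrow> alS | gaS \<Rightarrow> siS | siS \<Rightarrow> gaS | deS \<Rightarrow> etS | etS \<Rightarrow> deS)"
proof (rule qbar_eqI)
  fix c assume "sS c = sS a" "c \<noteq> a"
  then show "c = (case a of alS \<Rightarrow> beS | beS \<Rightarrow> alS | gaS \<Rightarrow> siS | siS \<Rightarrow> gaS | deS \<Rightarrow> etS | etS \<Rightarrow> deS)"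
    by (cases a; cases c) simp_all
qed (cases a; simp)+

lemma gperm_T:
  "gperm UNIV sT fT a = (case a of al1 \<Rightarrow> be1 | al2 \<Rightarrow> be2 | al3 \<Rightarrow> be3 | be1 \<Rightarrow> al1 | be2 \<Rightarrow> al2 | be3 \<Rightarrow> al3)"
  by (cases a) (simp_all add: gperm_def qbar_T)

lemma gperm_S:
  "gperm UNIV sS fS a = (case a of alS \<Rightarrow> alS | beS \<Rightarrow> siS | gaS \<Rightarrow> beS | siS \<Rightarrow> deS | deS \<Rightarrow> gaS | etS \<Rightarrow> etS)"
  by (cases a) (simp_all add: gperm_def qbar_S)

lemma gorb_len_T: "gorb_len UNIV sT fT a = 2"
proof (rule gorb_len_eqI)
  fix k :: nat assume "0 < k" "k < 2"
  then have "k = 1" by simp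
  then show "(gperm UNIV sT fT ^^ k) a \<noteq> a" by (cases a) (simp_all add: gperm_T)
qed (cases a; simp add: gperm_T numeral_2_eq_2)+

lemma gorb_len_S: "gorb_len UNIV sS fS a = (if a = alS \<or> a = etS then 1 else 4)"
proof (rule gorb_len_eqI)
  fix k :: nat assume "0 < k" "k < (if a = alS \<or> a = etS then 1 else 4)"
  then have "a \<noteq> alS \<and> a \<noteq> etS \<and> (k = 1 \<or> k = 2 \<or> k = 3)" by (auto split: if_splits)
  then show "(gperm UNIV sS fS ^^ k) a \<noteq> a" by (cases a) (auto simp: gperm_S eval_nat_numeral)
qed (cases a; simp add: gperm_S eval_nat_numeral)+

lemma setcompr_arrT:
  "{f a | a. a \<in> UNIV} = {f al1, f al2, f al3, f be1, f be2, f be3}"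
  "{f a | a. a \<in> UNIV \<and> P a} = (\<Union>a\<in>{al1, al2, al3, be1, be2, be3}. if P a then {f a} else {})"
  by (auto simp: UNIV_arrT)

lemma setcompr_arrS:
  "{f a | a. a \<in> UNIV} = {f alS, f beS, f gaS, f siS, f deS, f etS}"
  "{f a | a. a \<in> UNIV \<and> P a} = (\<Union>a\<in>{alS, beS, gaS, siS, deS, etS}. if P a then {f a} else {})"
  by (auto simp: UNIV_arrS)

lemma Apath_T: "Apath_list UNIV sT fT mT a = (case a of al1 \<Rightarrow> [al1, be1, al1] | al2 \<Rightarrow> [al2, be2, al2]
    | al3 \<Rightarrow> [al3] | be1 \<Rightarrow> [be1, al1, be1] | be2 \<Rightarrow> [be2, al2, be2] | be3 \<Rightarrow> [be3])"
  by (cases a) (simp_all add: Apath_list_def gorb_len_T upt_rec gperm_T)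

lemma Apath_S: "Apath_list UNIV sS fS mS a = (case a of alS \<Rightarrow> [alS] | beS \<Rightarrow> [beS, siS, deS]
    | gaS \<Rightarrow> [gaS, beS, siS] | siS \<Rightarrow> [siS, deS, gaS] | deS \<Rightarrow> [deS, gaS, beS] | etS \<Rightarrow> [etS])"
  by (cases a) (simp_all add: Apath_list_def gorb_len_S upt_rec gperm_S)

definition relsT :: "'k::field \<Rightarrow> (nat \<times> arrT list \<Rightarrow> 'k) set" where
  "relsT \<mu> =
     {comm_rel (1, [al1, al2]) 1 (1, [be3]), comm_rel (2, [al2, al3]) \<mu> (2, [be1, al1, be1]),
      comm_rel (3, [al3, al1]) 1 (3, [be2, al2, be2]), comm_rel (2, [be1, be3]) 1 (2, [al2, be2, al2]),
      comm_rel (3, [be2, be1]) 1 (3, [al3]), comm_rel (1, [be3, be2]) \<mu> (1, [al1, be1, al1])} \<union>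
     pe ` {(2, [al2, al3, be3]), (3, [al3, al1, be1]), (2, [be1, be3, al3]), (1, [be3, be2, al2]),
           (1, [al1, be1, be3]), (3, [al3, be3, be2]), (3, [be2, al2, al3]), (1, [be3, al3, al1])}"

definition relsS :: "'k::field \<Rightarrow> (nat \<times> arrS list \<Rightarrow> 'k) set" where
  "relsS lam =
     {comm_rel (1, [alS, beS]) lam (1, [beS, siS, deS]), comm_rel (1, [beS, gaS]) 1 (1, [alS]),
      comm_rel (2, [gaS, alS]) lam (2, [siS, deS, gaS]), comm_rel (2, [siS, etS]) lam (2, [gaS, beS, siS]),
      comm_rel (3, [deS, siS]) 1 (3, [etS]), comm_rel (3, [etS, deS]) lam (3, [deS, gaS, beS])} \<union>
     pe ` {(1, [alS, beS, siS]), (2, [gaS, alS, alS]), (2, [siS, etS, etS]), (3, [etS, deS, gaS]),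
           (1, [alS, alS, beS]), (1, [beS, siS, etS]), (3, [deS, gaS, alS]), (3, [etS, etS, deS])}"

lemma WSA_rels_T: "WSA_rels UNIV sT fT mT (cT \<mu>) = relsT \<mu>"
  unfolding WSA_rels_def setcompr_arrT relsT_def comm_rel_def
  by (simp add: virtual_arrow_def gorb_len_T qbar_T Apath_T gperm_T apath_def) blast

lemma WSA_rels_S: "WSA_rels UNIV sS fS mS (cS lam) = relsS lam"
  unfolding WSA_rels_def setcompr_arrS relsS_def comm_rel_def
  by (simp add: virtual_arrow_def gorb_len_S qbar_S Apath_S gperm_S apath_def) blast

lemma qverts_T: "qverts UNIV sT = {1, 2, 3}"
  by (auto simp: qverts_def UNIV_arrT)

lemma qverts_S: "qverts UNIV sS = {1, 2, 3}"
  by (auto simp: qverts_def UNIV_arrS)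

lemma quiver_T: "tT ` UNIV \<subseteq> sT ` UNIV" "finite (UNIV :: arrT set)"
  by (auto simp: UNIV_arrT)

lemma quiver_S: "tS ` UNIV \<subseteq> sS ` UNIV" "finite (UNIV :: arrS set)"
  by (auto simp: UNIV_arrS)

fun phiT :: "'k::field \<Rightarrow> arrT \<Rightarrow> (nat \<times> arrS list \<Rightarrow> 'k)" where
  "phiT lam al1 = pe (1, [beS])"
| "phiT lam be1 = pe (2, [gaS])"
| "phiT lam al2 = pe (2, [siS])"
| "phiT lam be2 = (\<lambda>q. inverse lam * pe (3, [deS]) q)"
| "phiT lam al3 = (\<lambda>q. inverse lam * pe (3, [deS, gaS]) q)"
| "phiT lam be3 = pe (1, [beS, siS])"

fun psiS :: "'k::field \<Rightarrow> arrS \<Rightarrow> (nat \<times> arrT list \<Rightarrow> 'k)" where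
  "psiS lam alS = pe (1, [al1, be1])"
| "psiS lam beS = pe (1, [al1])"
| "psiS lam gaS = pe (2, [be1])"
| "psiS lam siS = pe (2, [al2])"
| "psiS lam deS = (\<lambda>q. lam * pe (3, [be2]) q)"
| "psiS lam etS = (\<lambda>q. lam * pe (3, [be2, al2]) q)"

lemma arrow_assignment_phiT: "arrow_assignment UNIV sT tT UNIV sS tS (phiT lam)"
proof (unfold_locales; (rule quiver_T quiver_S)?)
  show "qverts UNIV sT = qverts UNIV sS" by (simp add: qverts_T qverts_S)
next
  fix a :: arrT
  show "phiT lam a \<in> carrier (path_ring UNIV sS tS)"
    by (cases a) (auto intro!: path_ring_scale_closed pe_carrier simp: valid_path_def qverts_S)
  show "starts_at (sT a) (phiT lam a)"
    by (cases a) (auto intro!: starts_at_scale starts_at_pe)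
  show "ends_at tS (tT a) (phiT lam a)"
    by (cases a) (auto intro!: ends_at_scale ends_at_pe simp: pend_def)
qed

lemma arrow_assignment_psiS: "arrow_assignment UNIV sS tS UNIV sT tT (psiS lam)"
proof (unfold_locales; (rule quiver_T quiver_S)?)
  show "qverts UNIV sS = qverts UNIV sT" by (simp add: qverts_T qverts_S)
next
  fix a :: arrS
  show "psiS lam a \<in> carrier (path_ring UNIV sT tT)"
    by (cases a) (auto intro!: path_ring_scale_closed pe_carrier simp: valid_path_def qverts_T)
  show "starts_at (sS a) (psiS lam a)"
    by (cases a) (auto intro!: starts_at_scale starts_at_pe)
  show "ends_at tT (tS a) (psiS lam a)"
    by (cases a) (auto intro!: ends_at_scale ends_at_pe simp: pend_def)
qed

lemma relsT_carrier: "relsT mu \<subseteq> carrier (path_ring UNIV sT tT)"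
  unfolding relsT_def by (auto intro!: comm_rel_carrier pe_carrier simp: valid_path_def qverts_T)

lemma relsS_carrier: "relsS lam \<subseteq> carrier (path_ring UNIV sS tS)"
  unfolding relsS_def by (auto intro!: comm_rel_carrier pe_carrier simp: valid_path_def qverts_S)

lemma phiT_relation_images:
  fixes lam :: "'k::field"
  defines \<Phi>: "\<Phi> \<equiv> path_hom tS tT (phiT lam)" and \<mu>: "\<mu> \<equiv> inverse (lam ^ 2)"
    and Sa: "Sa \<equiv> comm_rel (1, [alS, beS]) lam (1, [beS, siS, deS])"
    and Sb: "Sb \<equiv> comm_rel (1, [beS, gaS]) 1 (1, [alS])"
    and Sg: "Sg \<equiv> comm_rel (2, [gaS, alS]) lam (2, [siS, deS, gaS])"
    and Ss: "Ss \<equiv> comm_rel (2, [siS, etS]) lam (2, [gaS, beS, siS])"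
    and Sd: "Sd \<equiv> comm_rel (3, [deS, siS]) 1 (3, [etS])"
    and Se: "Se \<equiv> comm_rel (3, [etS, deS]) lam (3, [deS, gaS, beS])"
  assumes lam: "lam \<noteq> 0"
  shows "\<Phi> (comm_rel (1, [al1, al2]) 1 (1, [be3])) = sandwich_sum tS []"
    and "\<Phi> (comm_rel (2, [al2, al3]) \<mu> (2, [be1, al1, be1])) =
      sandwich_sum tS [(- \<mu>, (2, [gaS]), Sb, (1, [])), (- \<mu>, (2, []), Sg, (1, []))]"
    and "\<Phi> (comm_rel (3, [al3, al1]) 1 (3, [be2, al2, be2])) =
      sandwich_sum tS [(- \<mu>, (3, []), Se, (2, [])), (- \<mu>, (3, []), Sd, (3, [deS]))]"
    and "\<Phi> (comm_rel (2, [be1, be3]) 1 (2, [al2, be2, al2])) =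
      sandwich_sum tS [(- inverse lam, (2, [siS]), Sd, (3, [])), (- inverse lam, (2, []), Ss, (3, []))]"
    and "\<Phi> (comm_rel (3, [be2, be1]) 1 (3, [al3])) = sandwich_sum tS []"
    and "\<Phi> (comm_rel (1, [be3, be2]) \<mu> (1, [al1, be1, al1])) =
      sandwich_sum tS [(- \<mu>, (1, []), Sa, (2, [])), (- \<mu>, (1, []), Sb, (1, [beS]))]"
    and "\<Phi> (pe (2, [al2, al3, be3])) = sandwich_sum tS
      [(\<mu>, (2, [siS, etS]), Sd, (3, [])), (\<mu>, (2, []), pe (2, [siS, etS, etS]), (3, [])),
       (- \<mu>, (2, [siS]), Se, (2, [siS]))]"
    and "\<Phi> (pe (3, [al3, al1, be1])) = sandwich_sum tS
      [(inverse lam, (3, [deS, gaS]), Sb, (1, [])), (inverse lam, (3, []), pe (3, [deS, gaS, alS]), (1, []))]"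
    and "\<Phi> (pe (2, [be1, be3, al3])) = sandwich_sum tS
      [(\<mu>, (2, [siS]), pe (3, [etS, deS, gaS]), (1, [])), (- \<mu>, (2, []), Ss, (3, [deS, gaS]))]"
    and "\<Phi> (pe (1, [be3, be2, al2])) = sandwich_sum tS
      [(inverse lam, (1, [beS, siS]), Sd, (3, [])), (inverse lam, (1, []), pe (1, [beS, siS, etS]), (3, []))]"
    and "\<Phi> (pe (1, [al1, be1, be3])) = sandwich_sum tS
      [(1, (1, []), Sb, (1, [beS, siS])), (1, (1, []), pe (1, [alS, beS, siS]), (3, []))]"
    and "\<Phi> (pe (3, [al3, be3, be2])) = sandwich_sum tS
      [(inverse (lam ^ 3), (3, [etS]), Sd, (3, [deS])), (inverse (lam ^ 3), (3, []), pe (3, [etS, etS, deS]), (2, [])),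
       (- inverse (lam ^ 3), (3, []), Se, (2, [siS, deS]))]"
    and "\<Phi> (pe (3, [be2, al2, al3])) = sandwich_sum tS
      [(\<mu>, (3, []), Sd, (3, [deS, gaS])), (\<mu>, (3, []), pe (3, [etS, deS, gaS]), (1, []))]"
    and "\<Phi> (pe (1, [be3, al3, al1])) = sandwich_sum tS
      [(\<mu>, (1, [alS]), Sb, (1, [beS])), (\<mu>, (1, []), pe (1, [alS, alS, beS]), (2, [])),
       (- \<mu>, (1, []), Sa, (2, [gaS, beS]))]"
  unfolding \<Phi> \<mu> Sa Sb Sg Ss Sd Se
  by (simp add: arrow_assignment.path_hom_comm_rel[OF arrow_assignment_phiT]
      arrow_assignment.path_hom_pe[OF arrow_assignment_phiT] valid_path_def qverts_T path_calc;
      simp add: fun_eq_iff pe_apply field_simps lam power2_eq_square power3_eq_cube)+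

lemma phiT_relations:
  fixes lam :: "'k::field"
  assumes lam: "lam \<noteq> 0" and g: "g \<in> relsT (inverse (lam ^ 2))"
  shows "path_hom tS tT (phiT lam) g \<in> genideal (path_ring UNIV sS tS) (relsS lam)"
proof -
  define J where "J = genideal (path_ring UNIV sS tS) (relsS lam)"
  have "sandwich_sum tS cs \<in> J"
    if "\<forall>(c, u, r, w) \<in> set cs. r \<in> relsS lam \<and> valid_path UNIV sS tS u \<and> valid_path UNIV sS tS w" for cs
    using sandwich_sum_in_genideal[OF quiver_S relsS_carrier that] unfolding J_def .
  then show ?thesis
    using g phiT_relation_images[OF lam] unfolding relsT_def J_def[symmetric]
    by (auto simp: relsS_def valid_path_def qverts_S)
qed

lemma psiS_relation_images:
  fixes lam :: "'k::field"
  defines \<Psi>: "\<Psi> \<equiv> path_hom tT tS (psiS lam)"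
    and TA: "TA \<equiv> comm_rel (1, [al1, al2]) 1 (1, [be3])"
    and TC: "TC \<equiv> comm_rel (2, [al2, al3]) (inverse (lam ^ 2)) (2, [be1, al1, be1])"
    and TE: "TE \<equiv> comm_rel (3, [al3, al1]) 1 (3, [be2, al2, be2])"
    and TB: "TB \<equiv> comm_rel (2, [be1, be3]) 1 (2, [al2, be2, al2])"
    and TD: "TD \<equiv> comm_rel (3, [be2, be1]) 1 (3, [al3])"
    and TF: "TF \<equiv> comm_rel (1, [be3, be2]) (inverse (lam ^ 2)) (1, [al1, be1, al1])"
  assumes lam: "lam \<noteq> 0"
  shows "\<Psi> (comm_rel (1, [alS, beS]) lam (1, [beS, siS, deS])) =
      sandwich_sum tT [(- (lam ^ 2), (1, []), TA, (3, [be2])), (- (lam ^ 2), (1, []), TF, (2, []))]"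
    and "\<Psi> (comm_rel (1, [beS, gaS]) 1 (1, [alS])) = sandwich_sum tT []"
    and "\<Psi> (comm_rel (2, [gaS, alS]) lam (2, [siS, deS, gaS])) =
      sandwich_sum tT [(- (lam ^ 2), (2, []), TC, (1, [])), (- (lam ^ 2), (2, [al2]), TD, (1, []))]"
    and "\<Psi> (comm_rel (2, [siS, etS]) lam (2, [gaS, beS, siS])) =
      sandwich_sum tT [(- lam, (2, [be1]), TA, (3, [])), (- lam, (2, []), TB, (3, []))]"
    and "\<Psi> (comm_rel (3, [deS, siS]) 1 (3, [etS])) = sandwich_sum tT []"
    and "\<Psi> (comm_rel (3, [etS, deS]) lam (3, [deS, gaS, beS])) =
      sandwich_sum tT [(- (lam ^ 2), (3, []), TE, (2, [])), (- (lam ^ 2), (3, []), TD, (1, [al1]))]"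
    and "\<Psi> (pe (1, [alS, beS, siS])) = sandwich_sum tT
      [(1, (1, [al1, be1]), TA, (3, [])), (1, (1, []), pe (1, [al1, be1, be3]), (3, []))]"
    and "\<Psi> (pe (2, [gaS, alS, alS])) = sandwich_sum tT
      [(lam ^ 2, (2, [al2]), pe (3, [al3, al1, be1]), (1, [])), (- (lam ^ 2), (2, []), TC, (1, [al1, be1]))]"
    and "\<Psi> (pe (2, [siS, etS, etS])) = sandwich_sum tT
      [(lam ^ 2, (2, [be1]), pe (1, [be3, be2, al2]), (3, [])), (- (lam ^ 2), (2, []), TB, (3, [be2, al2]))]"
    and "\<Psi> (pe (3, [etS, deS, gaS])) = sandwich_sum tT
      [(lam ^ 2, (3, [be2, al2]), TD, (1, [])), (lam ^ 2, (3, []), pe (3, [be2, al2, al3]), (1, []))]"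
    and "\<Psi> (pe (1, [alS, alS, beS])) = sandwich_sum tT
      [(lam ^ 2, (1, [be3]), TD, (1, [al1])), (lam ^ 2, (1, []), pe (1, [be3, al3, al1]), (2, [])),
       (- (lam ^ 2), (1, []), TF, (2, [be1, al1]))]"
    and "\<Psi> (pe (1, [beS, siS, etS])) = sandwich_sum tT
      [(lam, (1, []), TA, (3, [be2, al2])), (lam, (1, []), pe (1, [be3, be2, al2]), (3, []))]"
    and "\<Psi> (pe (3, [etS, etS, deS])) = sandwich_sum tT
      [(lam ^ 3, (3, [al3]), TA, (3, [be2])), (lam ^ 3, (3, []), pe (3, [al3, be3, be2]), (2, [])),
       (- (lam ^ 3), (3, []), TE, (2, [al2, be2]))]"
    and "\<Psi> (pe (3, [deS, gaS, alS])) = sandwich_sum tT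
      [(lam, (3, []), TD, (1, [al1, be1])), (lam, (3, []), pe (3, [al3, al1, be1]), (1, []))]"
  unfolding \<Psi> TA TC TE TB TD TF
  by (simp add: arrow_assignment.path_hom_comm_rel[OF arrow_assignment_psiS]
      arrow_assignment.path_hom_pe[OF arrow_assignment_psiS] valid_path_def qverts_S path_calc;
      simp add: fun_eq_iff pe_apply field_simps lam power2_eq_square power3_eq_cube)+

lemma psiS_relations:
  fixes lam :: "'k::field"
  assumes lam: "lam \<noteq> 0" and g: "g \<in> relsS lam"
  shows "path_hom tT tS (psiS lam) g \<in> genideal (path_ring UNIV sT tT) (relsT (inverse (lam ^ 2)))"
proof -
  define I where "I = genideal (path_ring UNIV sT tT) (relsT (inverse (lam ^ 2)))"
  have "sandwich_sum tT cs \<in> I"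
    if "\<forall>(c, u, r, w) \<in> set cs. r \<in> relsT (inverse (lam ^ 2)) \<and> valid_path UNIV sT tT u \<and>
      valid_path UNIV sT tT w" for cs
    using sandwich_sum_in_genideal[OF quiver_T relsT_carrier that] unfolding I_def .
  then show ?thesis
    using g psiS_relation_images[OF lam] unfolding relsS_def I_def[symmetric]
    by (auto simp: relsT_def valid_path_def qverts_T)
qed

lemma psiS_phiT_arrows:
  fixes lam :: "'k::field"
  assumes lam: "lam \<noteq> 0"
  shows "(\<lambda>q. path_hom tT tS (psiS lam) (path_hom tS tT (phiT lam) (pe (sT a, [a]))) q - pe (sT a, [a]) q)
    \<in> genideal (path_ring UNIV sT tT) (relsT (inverse (lam ^ 2)))"
proof -
  have "(\<lambda>q. path_hom tT tS (psiS lam) (path_hom tS tT (phiT lam) (pe (sT a, [a]))) q - pe (sT a, [a]) q) =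
    sandwich_sum tT (case a of
        al3 \<Rightarrow> [(1, (3, []), comm_rel (3, [be2, be1]) 1 (3, [al3]), (1, []))]
      | be3 \<Rightarrow> [(1, (1, []), comm_rel (1, [al1, al2]) 1 (1, [be3]), (3, []))]
      | _ \<Rightarrow> [])"
    by (cases a; simp add: arrow_assignment.path_hom_pe[OF arrow_assignment_phiT]
        arrow_assignment.path_hom_pe[OF arrow_assignment_psiS]
        arrow_assignment.path_hom_scale[OF arrow_assignment_psiS] pe_carrier valid_path_def qverts_S path_calc;
        simp add: fun_eq_iff pe_apply field_simps lam)
  also have "\<dots> \<in> genideal (path_ring UNIV sT tT) (relsT (inverse (lam ^ 2)))"
    by (rule sandwich_sum_in_genideal[OF quiver_T relsT_carrier])
      (cases a; simp add: relsT_def valid_path_def qverts_T)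
  finally show ?thesis .
qed

lemma phiT_psiS_arrows:
  fixes lam :: "'k::field"
  assumes lam: "lam \<noteq> 0"
  shows "(\<lambda>q. path_hom tS tT (phiT lam) (path_hom tT tS (psiS lam) (pe (sS b, [b]))) q - pe (sS b, [b]) q)
    \<in> genideal (path_ring UNIV sS tS) (relsS lam)"
proof -
  have "(\<lambda>q. path_hom tS tT (phiT lam) (path_hom tT tS (psiS lam) (pe (sS b, [b]))) q - pe (sS b, [b]) q) =
    sandwich_sum tS (case b of
        alS \<Rightarrow> [(1, (1, []), comm_rel (1, [beS, gaS]) 1 (1, [alS]), (1, []))]
      | etS \<Rightarrow> [(1, (3, []), comm_rel (3, [deS, siS]) 1 (3, [etS]), (3, []))]
      | _ \<Rightarrow> [])"
    by (cases b; simp add: arrow_assignment.path_hom_pe[OF arrow_assignment_psiS]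
        arrow_assignment.path_hom_pe[OF arrow_assignment_phiT]
        arrow_assignment.path_hom_scale[OF arrow_assignment_phiT] pe_carrier valid_path_def qverts_T path_calc;
        simp add: fun_eq_iff pe_apply field_simps lam)
  also have "\<dots> \<in> genideal (path_ring UNIV sS tS) (relsS lam)"
    by (rule sandwich_sum_in_genideal[OF quiver_S relsS_carrier])
      (cases b; simp add: relsS_def valid_path_def qverts_S)
  finally show ?thesis .
qed

theorem lemma3p5:
  fixes lam :: "'k::field"
  assumes "alg_closed TYPE('k)"
    and "lam \<noteq> 0"
  shows "kalg_quot_iso
           (path_ring UNIV sT tT) (WSA_ideal UNIV sT tT fT mT (cT (inverse (lam ^ 2))))
           (path_ring UNIV sS tS) (WSA_ideal UNIV sS tS fS mS (cS lam))"
  unfolding WSA_ideal_def WSA_rels_T WSA_rels_S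
  by (rule kalg_quot_iso_by_arrow_maps[OF arrow_assignment_phiT[of lam] arrow_assignment_psiS[of lam]
        relsT_carrier relsS_carrier])
    (simp_all add: assms(2) phiT_relations psiS_relations psiS_phiT_arrows phiT_psiS_arrows)

end
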